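(* There is an injective algebra homomorphism $$\Theta:\ \mathsf{H}\longrightarrow \mathbb{C}[y_1^{\pm1},\ldots,y_n^{\pm1}]\#_\alpha G$$ such that, for all $i\in\{1,\ldots,n\}$, $$\Theta(x_i)=y_i-\left(\frac{\zeta t_i}{\zeta-1}\right)y_{i+1}^{-1}g_i,\qquad \Theta(g_i)=g_i$$ (indices modulo $n$, so $y_{n+1}=y_1$).
   Context: Fix integers $n\ge 3$ and $\ell\ge 2$, and let $\zeta$ be a primitive $\ell$-th root of unity. All subscripts are taken modulo $n$ (e.g. $x_{n+1}=x_1$). Let $V=\mathbb{C}^n$ with standard basis $x_1,\ldots,x_n$, and let $G$ be the group of all diagonal matrices $g\in SL_n(\mathbb{C})$ with $g^\ell=1$; $G$ acts on $V$ and hence on the tensor algebra $TV$. For $i=1,\ldots,n$ let $g_i\in G$ be given by $g_i(x_i)=\zeta x_i$, $g_i(x_{i+1})=\zeta^{-1}x_{i+1}$, $g_i(x_j)=x_j$ otherwise; then $g_1,\ldots,g_{n-1}$ freely generate $G\cong(\mathbb{Z}/\ell\mathbb{Z})^{n-1}$ and $g_n=g_1^{-1}\cdots g_{n-1}^{-1}$. Define the 2-cocycle $\alpha$ by $\alpha(g_1^{i_1}\cdots g_{n-1}^{i_{n-1}},g_1^{j_1}\cdots g_{n-1}^{j_{n-1}})=\zeta^{-i_1j_2-i_2j_3-\cdots-i_{n-2}j_{n-1}}$. For an algebra $E$ with $G$-action, $E\#_\alpha G$ is $E\otimes\mathbb{C}G$ with product $(r\otimes g)(s\otimes h)=\alpha(g,h)\,r\,(g\cdot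 s)\otimes gh$; the product of $g,h\in G$ in it is written $g*h=\alpha(g,h)gh$. Let $t=(t_1,\ldots,t_n)\in\mathbb{C}^n$. $\mathsf{H}$ is the quotient of $TV\#_\alpha G$ by the relations $x_ix_{i+1}-x_{i+1}x_i=t_ig_i$ for all $i$, and $x_ix_j-x_jx_i=0$ for all $i,j\in\{1,\ldots,n\}$ with $|i-j|\notin\{1,n-1\}$. The group $G$ acts on the Laurent polynomial algebra $\mathbb{C}[y_1^{\pm1},\ldots,y_n^{\pm1}]$ by $g_i\cdot y_1^{p_1}\cdots y_n^{p_n}=\zeta^{p_i-p_{i+1}}y_1^{p_1}\cdots y_n^{p_n}$ for $i=1,\ldots,n-1$ and $p\in\mathbb{Z}^n$. *)

theory Defs
  imports Complex_Main
begin

text \<open>Indices run over 1..n; succ_idx n n = 1 (subscripts modulo n).\<close>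
definition succ_idx :: "nat \<Rightarrow> nat \<Rightarrow> nat" where
  "succ_idx n i = (if i = n then 1 else i + 1)"

text \<open>A diagonal matrix is represented by its diagonal entries c 1, ..., c n
  (extended by 1 outside 1..n).  G = diagonal matrices in SL_n with g^l = 1.\<close>
definition Gset :: "nat \<Rightarrow> nat \<Rightarrow> (nat \<Rightarrow> complex) set" where
  "Gset n l = {c. (\<forall>i\<in>{1..n}. c i ^ l = 1) \<and> (\<forall>i. i \<notin> {1..n} \<longrightarrow> c i = 1)
                 \<and> (\<Prod>i\<in>{1..n}. c i) = 1}"

definition gmul :: "(nat \<Rightarrow> complex) \<Rightarrow> (nat \<Rightarrow> complex) \<Rightarrow> nat \<Rightarrow> complex" where
  "gmul g h = (\<lambda>i. g i * h i)"

definition gone :: "nat \<Rightarrow> complex" where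
  "gone = (\<lambda>i. 1)"

text \<open>The generator g_k: g_k(x_k) = zeta x_k, g_k(x_(k+1)) = zeta^-1 x_(k+1), identity otherwise.\<close>
definition gen :: "nat \<Rightarrow> complex \<Rightarrow> nat \<Rightarrow> nat \<Rightarrow> complex" where
  "gen n \<zeta> k = (\<lambda>j. if j \<in> {1..n} then
                       (if j = k then \<zeta> else if j = succ_idx n k then inverse \<zeta> else 1)
                     else 1)"

definition gword :: "nat \<Rightarrow> complex \<Rightarrow> (nat \<Rightarrow> nat) \<Rightarrow> nat \<Rightarrow> complex" where
  "gword n \<zeta> e = (\<lambda>j. \<Prod>k\<in>{1..n-1}. (gen n \<zeta> k j) ^ e k)"

definition coords :: "nat \<Rightarrow> nat \<Rightarrow> complex \<Rightarrow> (nat \<Rightarrow> complex) \<Rightarrow> nat \<Rightarrow> nat" where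
  "coords n l \<zeta> g = (THE e. (\<forall>k. e k < l) \<and> (\<forall>k. k \<notin> {1..n-1} \<longrightarrow> e k = 0)
                           \<and> gword n \<zeta> e = g)"

definition alpha :: "nat \<Rightarrow> nat \<Rightarrow> complex \<Rightarrow> (nat \<Rightarrow> complex) \<Rightarrow> (nat \<Rightarrow> complex) \<Rightarrow> complex" where
  "alpha n l \<zeta> g h = \<zeta> powi (- (\<Sum>k\<in>{1..n-2}. int (coords n l \<zeta> g k) * int (coords n l \<zeta> h (k+1))))"

text \<open>Action of g on the word x_(w1) ... x_(wm) of TV (scalar factor).\<close>
definition xact :: "(nat \<Rightarrow> complex) \<Rightarrow> nat list \<Rightarrow> complex" where
  "xact g w = prod_list (map g w)"

text \<open>Action of g = prod g_k^(i_k) on the Laurent monomial y^p (scalar factor):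
  each g_k multiplies y^p by zeta^(p_k - p_(k+1)).\<close>
definition yact :: "nat \<Rightarrow> nat \<Rightarrow> complex \<Rightarrow> (nat \<Rightarrow> complex) \<Rightarrow> (nat \<Rightarrow> int) \<Rightarrow> complex" where
  "yact n l \<zeta> g p = \<zeta> powi (\<Sum>k\<in>{1..n-1}. int (coords n l \<zeta> g k) * (p k - p (k+1)))"

definition tw_mult :: "('b \<Rightarrow> 'b \<Rightarrow> 'b) \<Rightarrow> ('b \<Rightarrow> 'b \<Rightarrow> complex)
                       \<Rightarrow> ('b \<Rightarrow> complex) \<Rightarrow> ('b \<Rightarrow> complex) \<Rightarrow> 'b \<Rightarrow> complex" where
  "tw_mult comb coef F H = (\<lambda>c. \<Sum>(a,b)\<in>{(a,b). F a \<noteq> 0 \<and> H b \<noteq> 0 \<and> comb a b = c}.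
                                     F a * H b * coef a b)"

definition basis_el :: "'b \<Rightarrow> 'b \<Rightarrow> complex" where
  "basis_el b = (\<lambda>c. if c = b then 1 else 0)"

definition fin_supp_on :: "'b set \<Rightarrow> ('b \<Rightarrow> complex) set" where
  "fin_supp_on B = {F. finite {b. F b \<noteq> 0} \<and> {b. F b \<noteq> 0} \<subseteq> B}"

subsection \<open>The algebra TV #_alpha G (basis: word in x_1..x_n tensor group element)\<close>

definition Sbasis :: "nat \<Rightarrow> nat \<Rightarrow> (nat list \<times> (nat \<Rightarrow> complex)) set" where
  "Sbasis n l = {(w, g). set w \<subseteq> {1..n} \<and> g \<in> Gset n l}"

definition Salg :: "nat \<Rightarrow> nat \<Rightarrow> (nat list \<times> (nat \<Rightarrow> complex) \<Rightarrow> complex) set" where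
  "Salg n l = fin_supp_on (Sbasis n l)"

definition smul :: "nat \<Rightarrow> nat \<Rightarrow> complex \<Rightarrow> (nat list \<times> (nat \<Rightarrow> complex) \<Rightarrow> complex)
                    \<Rightarrow> (nat list \<times> (nat \<Rightarrow> complex) \<Rightarrow> complex) \<Rightarrow> nat list \<times> (nat \<Rightarrow> complex) \<Rightarrow> complex" where
  "smul n l \<zeta> = tw_mult (\<lambda>(w, g) (w', h). (w @ w', gmul g h))
                        (\<lambda>(w, g) (w', h). alpha n l \<zeta> g h * xact g w')"

definition sx :: "nat \<Rightarrow> nat list \<times> (nat \<Rightarrow> complex) \<Rightarrow> complex" where
  "sx i = basis_el ([i], gone)"

definition sg :: "(nat \<Rightarrow> complex) \<Rightarrow> nat list \<times> (nat \<Rightarrow> complex) \<Rightarrow> complex" where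
  "sg g = basis_el ([], g)"

definition sone :: "nat list \<times> (nat \<Rightarrow> complex) \<Rightarrow> complex" where
  "sone = basis_el ([], gone)"

subsection \<open>The algebra C[y^(+-1)] #_alpha G (basis: Laurent monomial y^p tensor group element)\<close>

definition Tbasis :: "nat \<Rightarrow> nat \<Rightarrow> ((nat \<Rightarrow> int) \<times> (nat \<Rightarrow> complex)) set" where
  "Tbasis n l = {(p, g). (\<forall>i. i \<notin> {1..n} \<longrightarrow> p i = 0) \<and> g \<in> Gset n l}"

definition Talg :: "nat \<Rightarrow> nat \<Rightarrow> ((nat \<Rightarrow> int) \<times> (nat \<Rightarrow> complex) \<Rightarrow> complex) set" where
  "Talg n l = fin_supp_on (Tbasis n l)"

definition tmul :: "nat \<Rightarrow> nat \<Rightarrow> complex \<Rightarrow> ((nat \<Rightarrow> int) \<times> (nat \<Rightarrow> complex) \<Rightarrow> complex)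
                    \<Rightarrow> ((nat \<Rightarrow> int) \<times> (nat \<Rightarrow> complex) \<Rightarrow> complex) \<Rightarrow> (nat \<Rightarrow> int) \<times> (nat \<Rightarrow> complex) \<Rightarrow> complex" where
  "tmul n l \<zeta> = tw_mult (\<lambda>(p, g) (p', h). (\<lambda>i. p i + p' i, gmul g h))
                        (\<lambda>(p, g) (p', h). alpha n l \<zeta> g h * yact n l \<zeta> g p')"

definition ymon :: "(nat \<Rightarrow> int) \<Rightarrow> (nat \<Rightarrow> int) \<times> (nat \<Rightarrow> complex) \<Rightarrow> complex" where
  "ymon p = basis_el (p, gone)"

definition ty :: "nat \<Rightarrow> (nat \<Rightarrow> int) \<times> (nat \<Rightarrow> complex) \<Rightarrow> complex" where
  "ty i = ymon (\<lambda>j. if j = i then 1 else 0)"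

definition tyinv :: "nat \<Rightarrow> (nat \<Rightarrow> int) \<times> (nat \<Rightarrow> complex) \<Rightarrow> complex" where
  "tyinv i = ymon (\<lambda>j. if j = i then -1 else 0)"

definition tg :: "(nat \<Rightarrow> complex) \<Rightarrow> (nat \<Rightarrow> int) \<times> (nat \<Rightarrow> complex) \<Rightarrow> complex" where
  "tg g = basis_el (\<lambda>_. 0, g)"

definition tone :: "(nat \<Rightarrow> int) \<times> (nat \<Rightarrow> complex) \<Rightarrow> complex" where
  "tone = basis_el (\<lambda>_. 0, gone)"

definition fdiff :: "('b \<Rightarrow> complex) \<Rightarrow> ('b \<Rightarrow> complex) \<Rightarrow> 'b \<Rightarrow> complex" where
  "fdiff F H = (\<lambda>b. F b - H b)"

definition ideal_gen :: "(('b \<Rightarrow> complex) \<Rightarrow> ('b \<Rightarrow> complex) \<Rightarrow> 'b \<Rightarrow> complex)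
                          \<Rightarrow> ('b \<Rightarrow> complex) set \<Rightarrow> ('b \<Rightarrow> complex) set \<Rightarrow> ('b \<Rightarrow> complex) set" where
  "ideal_gen mult A R = \<Inter>{J. R \<subseteq> J \<and> J \<subseteq> A \<and> (\<lambda>_. 0) \<in> J
      \<and> (\<forall>a\<in>J. \<forall>b\<in>J. (\<lambda>x. a x + b x) \<in> J)
      \<and> (\<forall>c. \<forall>a\<in>J. (\<lambda>x. c * a x) \<in> J)
      \<and> (\<forall>a\<in>A. \<forall>j\<in>J. mult a j \<in> J \<and> mult j a \<in> J)}"

definition idx_dist :: "nat \<Rightarrow> nat \<Rightarrow> nat" where
  "idx_dist i j = (if j \<le> i then i - j else j - i)"

definition Hrels :: "nat \<Rightarrow> nat \<Rightarrow> complex \<Rightarrow> (nat \<Rightarrow> complex)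
                     \<Rightarrow> (nat list \<times> (nat \<Rightarrow> complex) \<Rightarrow> complex) set" where
  "Hrels n l \<zeta> t =
     {fdiff (fdiff (smul n l \<zeta> (sx i) (sx (succ_idx n i))) (smul n l \<zeta> (sx (succ_idx n i)) (sx i)))
            (\<lambda>b. t i * sg (gen n \<zeta> i) b) | i. i \<in> {1..n}}
   \<union> {fdiff (smul n l \<zeta> (sx i) (sx j)) (smul n l \<zeta> (sx j) (sx i)) | i j.
        i \<in> {1..n} \<and> j \<in> {1..n} \<and> idx_dist i j \<notin> {1, n - 1}}"

text \<open>H = Salg / Hideal.\<close>
definition Hideal :: "nat \<Rightarrow> nat \<Rightarrow> complex \<Rightarrow> (nat \<Rightarrow> complex)
                      \<Rightarrow> (nat list \<times> (nat \<Rightarrow> complex) \<Rightarrow> complex) set" where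
  "Hideal n l \<zeta> t = ideal_gen (smul n l \<zeta>) (Salg n l) (Hrels n l \<zeta> t)"

end

theory Submission
  imports Defs "HOL-Number_Theory.Cong" "HOL-Library.Multiset"
begin

(* Theta is defined on the basis x_(w_1) ... x_(w_m) (x) g of TV #_alpha G as the product
   Theta(x_(w_1)) ... Theta(x_(w_m)) g, extended linearly.  The key identity
      alpha(g, g_j) g(x_(j+1))^(-1) = g(x_j) alpha(g_j, g) makes g Theta(x_j) = g(x_j) Theta(x_j) g,
      so Theta respects the twisted product.
   3. The commutators of the Theta(x_j) show that the defining relations of H are killed.
   4. Conversely, modulo the ideal every element reduces to sorted words (a PBW-type spanning
      argument), and Theta(x_w (x) g) has leading term y^(letter counts of w) (x) g in top total
      degree, so Theta is injective on combinations of sorted words.  Hence ker Theta is the ideal. *)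

section \<open>Generic algebra\<close>

text \<open>An element of a twisted algebra is a finitely supported coefficient function on a
  basis; the product of two basis elements a, b is coef a b times the basis element comb a b.\<close>

definition supp :: "('b \<Rightarrow> complex) \<Rightarrow> 'b set" where
  "supp F = {b. F b \<noteq> 0}"

lemma supp_basis: "supp (basis_el b) = {b}"
  by (auto simp: supp_def basis_el_def)

lemma supp_lin: "supp (\<lambda>y. a * F y + b * H y) \<subseteq> supp F \<union> supp H"
  by (auto simp: supp_def)

lemma supp_scale: "supp (\<lambda>y. a * F y) \<subseteq> supp F"
  by (auto simp: supp_def)

lemma supp_sum: "supp (\<lambda>y. \<Sum>i\<in>I. f i y) \<subseteq> (\<Union>i\<in>I. supp (f i))"
  by (auto simp: supp_def intro: ccontr)

lemma fin_supp_on_iff: "F \<in> fin_supp_on B \<longleftrightarrow> finite (supp F) \<and> supp F \<subseteq> B"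
  by (simp add: fin_supp_on_def supp_def)

lemma tw_sum:
  assumes "finite A" "finite B" "supp F \<subseteq> A" "supp H \<subseteq> B"
  shows "tw_mult comb coef F H c
           = (\<Sum>a\<in>A. \<Sum>b\<in>B. of_bool (comb a b = c) * (F a * H b * coef a b))"
proof -
  have "tw_mult comb coef F H c
      = (\<Sum>(a,b)\<in>{(a,b). F a \<noteq> 0 \<and> H b \<noteq> 0 \<and> comb a b = c}. F a * H b * coef a b)"
    by (simp add: tw_mult_def)
  also have "\<dots> = (\<Sum>(a,b)\<in>A\<times>B. of_bool (comb a b = c) * (F a * H b * coef a b))"
    by (rule sum.mono_neutral_cong_left) (use assms in \<open>auto simp: supp_def\<close>)
  also have "\<dots> = (\<Sum>a\<in>A. \<Sum>b\<in>B. of_bool (comb a b = c) * (F a * H b * coef a b))"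
    by (simp add: sum.cartesian_product)
  finally show ?thesis .
qed

lemma tw_supp: "supp (tw_mult comb coef F H) \<subseteq> (\<lambda>(a,b). comb a b) ` (supp F \<times> supp H)"
proof
  fix c assume c: "c \<in> supp (tw_mult comb coef F H)"
  have "{(a,b). F a \<noteq> 0 \<and> H b \<noteq> 0 \<and> comb a b = c} \<noteq> {}"
  proof
    assume "{(a,b). F a \<noteq> 0 \<and> H b \<noteq> 0 \<and> comb a b = c} = {}"
    then have "tw_mult comb coef F H c = 0" by (simp only: tw_mult_def sum.empty)
    with c show False by (simp add: supp_def)
  qed
  then show "c \<in> (\<lambda>(a,b). comb a b) ` (supp F \<times> supp H)"
    by (force simp: supp_def)
qed

lemma tw_nonzero:
  "tw_mult comb coef F H c \<noteq> 0 \<Longrightarrow> \<exists>a b. F a \<noteq> 0 \<and> H b \<noteq> 0 \<and> comb a b = c"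
  using tw_supp[of comb coef F H] by (force simp: supp_def)

lemma tw_basis:
  "tw_mult comb coef (basis_el a) (basis_el b) c = coef a b * basis_el (comb a b) c"
proof -
  have "tw_mult comb coef (basis_el a) (basis_el b) c
        = (\<Sum>x\<in>{a}. \<Sum>y\<in>{b}. of_bool (comb x y = c) * (basis_el a x * basis_el b y * coef x y))"
    by (rule tw_sum) (auto simp: supp_def basis_el_def)
  then show ?thesis by (simp add: basis_el_def)
qed

lemma tw_sum_left:
  assumes "finite I" "\<And>i. i \<in> I \<Longrightarrow> finite (supp (f i))" "finite (supp H)"
  shows "tw_mult comb coef (\<lambda>z. \<Sum>i\<in>I. f i z) H c = (\<Sum>i\<in>I. tw_mult comb coef (f i) H c)"
proof -
  let ?U = "\<Union>i\<in>I. supp (f i)"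
  have fU: "finite ?U" using assms by auto
  have "tw_mult comb coef (\<lambda>z. \<Sum>i\<in>I. f i z) H c
     = (\<Sum>a\<in>?U. \<Sum>b\<in>supp H. of_bool (comb a b = c) * ((\<Sum>i\<in>I. f i a) * H b * coef a b))"
    by (rule tw_sum[OF fU assms(3) supp_sum]) auto
  also have "\<dots> = (\<Sum>i\<in>I. \<Sum>a\<in>?U. \<Sum>b\<in>supp H. of_bool (comb a b = c) * (f i a * H b * coef a b))"
    by (simp add: sum_distrib_left sum_distrib_right sum.swap[of _ I] mult_ac)
  also have "\<dots> = (\<Sum>i\<in>I. tw_mult comb coef (f i) H c)"
    by (rule sum.cong[OF refl], rule tw_sum[symmetric]) (use assms fU in auto)
  finally show ?thesis .
qed

lemma tw_sum_right:
  assumes "finite I" "\<And>i. i \<in> I \<Longrightarrow> finite (supp (f i))" "finite (supp F)"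
  shows "tw_mult comb coef F (\<lambda>z. \<Sum>i\<in>I. f i z) c = (\<Sum>i\<in>I. tw_mult comb coef F (f i) c)"
proof -
  let ?U = "\<Union>i\<in>I. supp (f i)"
  have fU: "finite ?U" using assms by auto
  have "tw_mult comb coef F (\<lambda>z. \<Sum>i\<in>I. f i z) c
     = (\<Sum>a\<in>supp F. \<Sum>b\<in>?U. of_bool (comb a b = c) * (F a * (\<Sum>i\<in>I. f i b) * coef a b))"
    by (rule tw_sum[OF assms(3) fU _ supp_sum]) auto
  also have "\<dots> = (\<Sum>i\<in>I. \<Sum>a\<in>supp F. \<Sum>b\<in>?U. of_bool (comb a b = c) * (F a * f i b * coef a b))"
    by (simp add: sum_distrib_left sum_distrib_right sum.swap[of _ I] mult_ac)
  also have "\<dots> = (\<Sum>i\<in>I. tw_mult comb coef F (f i) c)"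
    by (rule sum.cong[OF refl], rule tw_sum[symmetric]) (use assms fU in auto)
  finally show ?thesis .
qed

lemma tw_lin_left:
  assumes "finite (supp F)" "finite (supp G)" "finite (supp H)"
  shows "tw_mult comb coef (\<lambda>z. a * F z + b * G z) H c
           = a * tw_mult comb coef F H c + b * tw_mult comb coef G H c"
proof -
  have fU: "finite (supp F \<union> supp G)" using assms by auto
  show ?thesis
    apply (subst tw_sum[OF fU assms(3) supp_lin subset_refl])
    apply (subst tw_sum[OF fU assms(3) _ subset_refl], force)
    apply (subst tw_sum[OF fU assms(3) _ subset_refl], force)
    by (simp add: sum_distrib_left sum.distrib algebra_simps)
qed

lemma tw_lin_right:
  assumes "finite (supp F)" "finite (supp G)" "finite (supp H)"
  shows "tw_mult comb coef H (\<lambda>z. a * F z + b * G z) c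
           = a * tw_mult comb coef H F c + b * tw_mult comb coef H G c"
proof -
  have fU: "finite (supp F \<union> supp G)" using assms by auto
  show ?thesis
    apply (subst tw_sum[OF assms(3) fU subset_refl supp_lin])
    apply (subst tw_sum[OF assms(3) fU subset_refl], force)
    apply (subst tw_sum[OF assms(3) fU subset_refl], force)
    by (simp add: sum_distrib_left sum.distrib algebra_simps)
qed

lemma tw_scale:
  assumes "finite (supp F)" "finite (supp H)"
  shows "tw_mult comb coef (\<lambda>u. a * F u) (\<lambda>u. b * H u) c = a * b * tw_mult comb coef F H c"
  using assms tw_lin_left[of F F "\<lambda>u. b * H u" comb coef a 0 c]
    tw_lin_right[of H H F comb coef b 0 c] supp_scale[of b H]
  by (simp add: finite_subset)

lemma tw_zero_left: "tw_mult comb coef (\<lambda>_. 0) H c = 0"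
  by (simp add: tw_mult_def)

lemma tw_zero_right: "tw_mult comb coef H (\<lambda>_. 0) c = 0"
  by (simp add: tw_mult_def)

lemma sum_over_fibres:
  fixes f :: "'u \<Rightarrow> complex" and g :: "'a \<Rightarrow> 'b \<Rightarrow> complex"
  assumes "finite A" "finite B" "finite U" "\<And>a b. a \<in> A \<Longrightarrow> b \<in> B \<Longrightarrow> h a b \<in> U"
  shows "(\<Sum>u\<in>U. f u * (\<Sum>a\<in>A. \<Sum>b\<in>B. of_bool (h a b = u) * g a b))
           = (\<Sum>a\<in>A. \<Sum>b\<in>B. f (h a b) * g a b)"
proof -
  have "(\<Sum>u\<in>U. f u * (\<Sum>a\<in>A. \<Sum>b\<in>B. of_bool (h a b = u) * g a b))
      = (\<Sum>a\<in>A. \<Sum>b\<in>B. \<Sum>u\<in>U. of_bool (h a b = u) * (f u * g a b))"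
    unfolding sum_distrib_left
    by (subst sum.swap, rule sum.cong[OF refl], subst sum.swap) (simp add: mult.left_commute)
  also have "\<dots> = (\<Sum>a\<in>A. \<Sum>b\<in>B. f (h a b) * g a b)"
    using assms by (auto intro!: sum.cong simp: of_bool_def sum.delta' if_distrib[where f="\<lambda>x. x * _"] cong: if_cong)
  finally show ?thesis .
qed

lemma tw_assoc:
  assumes fF: "finite (supp F)" and fH: "finite (supp H)" and fK: "finite (supp K)"
    and ass: "\<And>a b c. a \<in> supp F \<Longrightarrow> b \<in> supp H \<Longrightarrow> c \<in> supp K \<Longrightarrow>
         comb (comb a b) c = comb a (comb b c) \<and> coef a b * coef (comb a b) c = coef b c * coef a (comb b c)"
  shows "tw_mult comb coef (tw_mult comb coef F H) K d = tw_mult comb coef F (tw_mult comb coef H K) d"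
proof -
  let ?A = "supp F" and ?B = "supp H" and ?C = "supp K"
  let ?U = "(\<lambda>(a,b). comb a b) ` (?A \<times> ?B)" and ?V = "(\<lambda>(a,b). comb a b) ` (?B \<times> ?C)"
  have fU: "finite ?U" "finite ?V" using assms by auto
  have "tw_mult comb coef (tw_mult comb coef F H) K d
    = (\<Sum>k\<in>?C. \<Sum>u\<in>?U. (of_bool (comb u k = d) * K k * coef u k) * tw_mult comb coef F H u)"
    by (subst tw_sum[OF fU(1) fK tw_supp subset_refl], subst sum.swap) (simp add: mult_ac)
  also have "\<dots> = (\<Sum>k\<in>?C. \<Sum>a\<in>?A. \<Sum>b\<in>?B.
      (of_bool (comb (comb a b) k = d) * K k * coef (comb a b) k) * (F a * H b * coef a b))"
    by (rule sum.cong[OF refl], subst tw_sum[OF fF fH subset_refl subset_refl])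
      (rule sum_over_fibres, use fU fF fH in auto)
  also have "\<dots> = (\<Sum>a\<in>?A. \<Sum>b\<in>?B. \<Sum>k\<in>?C.
      (of_bool (comb (comb a b) k = d) * K k * coef (comb a b) k) * (F a * H b * coef a b))"
    by (subst sum.swap, rule sum.cong[OF refl], rule sum.swap)
  also have "\<dots> = (\<Sum>a\<in>?A. \<Sum>b\<in>?B. \<Sum>k\<in>?C.
      (of_bool (comb a (comb b k) = d) * F a * coef a (comb b k)) * (H b * K k * coef b k))"
    by (intro sum.cong refl) (use ass in \<open>simp add: mult_ac\<close>)
  also have "\<dots> = (\<Sum>a\<in>?A. \<Sum>v\<in>?V. (of_bool (comb a v = d) * F a * coef a v) * tw_mult comb coef H K v)"
    by (rule sum.cong[OF refl], subst tw_sum[OF fH fK subset_refl subset_refl])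
      (rule sum_over_fibres[symmetric], use fU fK fH in auto)
  also have "\<dots> = tw_mult comb coef F (tw_mult comb coef H K) d"
    by (subst tw_sum[OF fF fU(2) subset_refl tw_supp]) (simp add: mult_ac)
  finally show ?thesis .
qed

locale twisted_algebra =
  fixes B :: "'b set" and comb :: "'b \<Rightarrow> 'b \<Rightarrow> 'b" and coef :: "'b \<Rightarrow> 'b \<Rightarrow> complex"
  assumes comb_closed: "a \<in> B \<Longrightarrow> b \<in> B \<Longrightarrow> comb a b \<in> B"
begin

abbreviation alg where "alg \<equiv> fin_supp_on B"
abbreviation mul where "mul \<equiv> tw_mult comb coef"

lemma alg_iff: "F \<in> alg \<longleftrightarrow> finite (supp F) \<and> supp F \<subseteq> B"
  by (rule fin_supp_on_iff)

lemma alg_fin: "F \<in> alg \<Longrightarrow> finite (supp F)"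
  by (simp add: alg_iff)

lemma alg_zero: "(\<lambda>_. 0) \<in> alg"
  by (simp add: alg_iff supp_def)

lemma alg_basis: "b \<in> B \<Longrightarrow> basis_el b \<in> alg"
  by (simp add: alg_iff supp_basis)

lemma alg_lin: "F \<in> alg \<Longrightarrow> H \<in> alg \<Longrightarrow> (\<lambda>y. a * F y + b * H y) \<in> alg"
  unfolding alg_iff using supp_lin[of a F b H] by (meson finite_Un finite_subset le_sup_iff subset_trans)

lemma alg_diff: "F \<in> alg \<Longrightarrow> H \<in> alg \<Longrightarrow> (\<lambda>y. F y - H y) \<in> alg"
  using alg_lin[of F H 1 "-1"] by simp

lemma alg_scale: "F \<in> alg \<Longrightarrow> (\<lambda>y. a * F y) \<in> alg"
  using alg_lin[of F F a 0] by simp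

lemma alg_sum: "finite I \<Longrightarrow> (\<And>i. i \<in> I \<Longrightarrow> f i \<in> alg) \<Longrightarrow> (\<lambda>y. \<Sum>i\<in>I. f i y) \<in> alg"
proof (induction I rule: finite_induct)
  case empty then show ?case using alg_zero by simp
next
  case (insert x F)
  then show ?case using alg_lin[of "f x" "\<lambda>y. \<Sum>i\<in>F. f i y" 1 1] by simp
qed

lemma mul_closed:
  assumes "F \<in> alg" "H \<in> alg" shows "mul F H \<in> alg"
proof -
  have "(\<lambda>(a,b). comb a b) ` (supp F \<times> supp H) \<subseteq> B"
    using assms comb_closed by (force simp: alg_iff)
  moreover have "finite ((\<lambda>(a,b). comb a b) ` (supp F \<times> supp H))"
    using assms by (simp add: alg_iff)
  ultimately show ?thesis using tw_supp[of comb coef F H]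
    by (meson alg_iff finite_subset subset_trans)
qed

lemma mul_basis:
  "mul (basis_el a) (basis_el b) = (\<lambda>c. coef a b * basis_el (comb a b) c)"
  by (rule ext) (rule tw_basis)

lemma mul_diff_left:
  "F \<in> alg \<Longrightarrow> H \<in> alg \<Longrightarrow> K \<in> alg \<Longrightarrow> mul (\<lambda>y. F y - H y) K = (\<lambda>c. mul F K c - mul H K c)"
  using tw_lin_left[of F H K comb coef 1 "-1"] by (auto simp: alg_iff)

lemma mul_diff_right:
  "F \<in> alg \<Longrightarrow> H \<in> alg \<Longrightarrow> K \<in> alg \<Longrightarrow> mul K (\<lambda>y. F y - H y) = (\<lambda>c. mul K F c - mul K H c)"
  using tw_lin_right[of F H K comb coef 1 "-1"] by (auto simp: alg_iff)

lemma mul_scale_left: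
  "F \<in> alg \<Longrightarrow> K \<in> alg \<Longrightarrow> mul (\<lambda>y. a * F y) K = (\<lambda>c. a * mul F K c)"
  using tw_lin_left[of F F K comb coef a 0] by (auto simp: alg_iff)

lemma mul_scale_right:
  "F \<in> alg \<Longrightarrow> K \<in> alg \<Longrightarrow> mul K (\<lambda>y. a * F y) = (\<lambda>c. a * mul K F c)"
  using tw_lin_right[of F F K comb coef a 0] by (auto simp: alg_iff)

lemma mul_zero_left: "mul (\<lambda>_. 0) F = (\<lambda>_. 0)"
  by (rule ext) (rule tw_zero_left)

lemma mul_zero_right: "mul F (\<lambda>_. 0) = (\<lambda>_. 0)"
  by (rule ext) (rule tw_zero_right)

lemma mul_unit_left:
  assumes unit: "\<And>b. b \<in> B \<Longrightarrow> comb e b = b \<and> coef e b = 1" and F: "F \<in> alg"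
  shows "mul (basis_el e) F = F"
proof
  fix c
  have "mul (basis_el e) F c
      = (\<Sum>x\<in>{e}. \<Sum>b\<in>supp F. of_bool (comb x b = c) * (basis_el e x * F b * coef x b))"
    by (rule tw_sum) (use F in \<open>auto simp: alg_iff supp_basis\<close>)
  also have "\<dots> = (\<Sum>b\<in>supp F. \<Sum>x\<in>{e}. of_bool (comb x b = c) * (basis_el e x * F b * coef x b))"
    by (rule sum.swap)
  also have "\<dots> = (\<Sum>b\<in>supp F. if b = c then F b else 0)"
    by (rule sum.cong[OF refl]) (use unit F in \<open>auto simp: alg_iff basis_el_def\<close>)
  also have "\<dots> = F c" using F by (simp add: alg_iff supp_def)
  finally show "mul (basis_el e) F c = F c" .
qed

lemma mul_unit_right:
  assumes unit: "\<And>b. b \<in> B \<Longrightarrow> comb b e = b \<and> coef b e = 1" and F: "F \<in> alg"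
  shows "mul F (basis_el e) = F"
proof
  fix c
  have "mul F (basis_el e) c
      = (\<Sum>b\<in>supp F. \<Sum>x\<in>{e}. of_bool (comb b x = c) * (F b * basis_el e x * coef b x))"
    by (rule tw_sum) (use F in \<open>auto simp: alg_iff supp_basis\<close>)
  also have "\<dots> = (\<Sum>b\<in>supp F. if b = c then F b else 0)"
    by (rule sum.cong[OF refl]) (use unit F in \<open>auto simp: alg_iff basis_el_def\<close>)
  also have "\<dots> = F c" using F by (simp add: alg_iff supp_def)
  finally show "mul F (basis_el e) c = F c" .
qed

end

locale assoc_twisted_algebra = twisted_algebra +
  assumes comb_assoc: "a \<in> B \<Longrightarrow> b \<in> B \<Longrightarrow> c \<in> B \<Longrightarrow> comb (comb a b) c = comb a (comb b c)"
    and coef_cocycle: "a \<in> B \<Longrightarrow> b \<in> B \<Longrightarrow> c \<in> B \<Longrightarrow>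
          coef a b * coef (comb a b) c = coef b c * coef a (comb b c)"
begin

lemma mul_assoc:
  assumes "F \<in> alg" "H \<in> alg" "K \<in> alg" shows "mul (mul F H) K = mul F (mul H K)"
proof (rule ext, rule tw_assoc)
  show "finite (supp F)" "finite (supp H)" "finite (supp K)" using assms by (auto simp: alg_iff)
  fix a b c assume "a \<in> supp F" "b \<in> supp H" "c \<in> supp K"
  then have "a \<in> B" "b \<in> B" "c \<in> B" using assms by (auto simp: alg_iff)
  then show "comb (comb a b) c = comb a (comb b c)
             \<and> coef a b * coef (comb a b) c = coef b c * coef a (comb b c)"
    by (simp add: comb_assoc coef_cocycle)
qed

end

definition lin_ext :: "('b \<Rightarrow> 'c \<Rightarrow> complex) \<Rightarrow> ('b \<Rightarrow> complex) \<Rightarrow> 'c \<Rightarrow> complex" where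
  "lin_ext f a = (\<lambda>y. \<Sum>b\<in>supp a. a b * f b y)"

lemma lin_ext_superset:
  assumes "finite A" "supp a \<subseteq> A" shows "lin_ext f a = (\<lambda>y. \<Sum>b\<in>A. a b * f b y)"
  unfolding lin_ext_def
  by (rule ext, rule sum.mono_neutral_left) (use assms in \<open>auto simp: supp_def\<close>)

lemma lin_ext_lin:
  assumes "finite (supp a)" "finite (supp b)"
  shows "lin_ext f (\<lambda>x. c1 * a x + c2 * b x) = (\<lambda>y. c1 * lin_ext f a y + c2 * lin_ext f b y)"
proof -
  have fin: "finite (supp a \<union> supp b)" using assms by auto
  show ?thesis
    unfolding lin_ext_superset[OF fin supp_lin] lin_ext_superset[OF fin Un_upper1]
      lin_ext_superset[OF fin Un_upper2]
    by (simp add: algebra_simps sum.distrib sum_distrib_left)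
qed

lemma lin_ext_basis: "lin_ext f (basis_el b) = f b"
  unfolding lin_ext_def supp_basis by (simp add: basis_el_def)

lemma lin_ext_zero: "lin_ext f (\<lambda>_. 0) = (\<lambda>_. 0)"
  by (simp add: lin_ext_def supp_def)

lemma lin_ext_mult:
  assumes fa: "finite (supp a)" and fb: "finite (supp b)"
    and ff: "\<And>x. x \<in> supp a \<union> supp b \<Longrightarrow> finite (supp (f x))"
    and hom: "\<And>x y. x \<in> supp a \<Longrightarrow> y \<in> supp b \<Longrightarrow>
                tw_mult comb' coef' (f x) (f y) = (\<lambda>v. coef x y * f (comb x y) v)"
  shows "lin_ext f (tw_mult comb coef a b) = tw_mult comb' coef' (lin_ext f a) (lin_ext f b)"
proof
  fix v
  let ?A = "supp a" and ?B = "supp b"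
  let ?C = "(\<lambda>(x,y). comb x y) ` (?A \<times> ?B)"
  have fC: "finite ?C" using fa fb by auto
  have fs: "\<And>x c. x \<in> ?A \<union> ?B \<Longrightarrow> finite (supp (\<lambda>u. c * f x u))"
    using ff supp_scale finite_subset by metis
  have "lin_ext f (tw_mult comb coef a b) v
      = (\<Sum>c\<in>?C. f c v * (\<Sum>x\<in>?A. \<Sum>y\<in>?B. of_bool (comb x y = c) * (a x * b y * coef x y)))"
    unfolding lin_ext_superset[OF fC tw_supp]
    by (simp add: tw_sum[OF fa fb subset_refl subset_refl] mult.commute)
  also have "\<dots> = (\<Sum>x\<in>?A. \<Sum>y\<in>?B. f (comb x y) v * (a x * b y * coef x y))"
    by (rule sum_over_fibres) (use fa fb fC in auto)
  also have "\<dots> = (\<Sum>x\<in>?A. \<Sum>y\<in>?B. tw_mult comb' coef' (\<lambda>u. a x * f x u) (\<lambda>u. b y * f y u) v)"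
    by (intro sum.cong refl) (simp add: tw_scale ff hom)
  also have "\<dots> = (\<Sum>x\<in>?A. tw_mult comb' coef' (\<lambda>u. a x * f x u) (lin_ext f b) v)"
    unfolding lin_ext_def[of f b]
    by (rule sum.cong[OF refl], rule tw_sum_right[symmetric]) (use fb fs in auto)
  also have "\<dots> = tw_mult comb' coef' (lin_ext f a) (lin_ext f b) v"
  proof -
    have fL: "finite (supp (lin_ext f b))"
      unfolding lin_ext_def by (rule finite_subset[OF supp_sum]) (use fb fs in auto)
    show ?thesis
      unfolding lin_ext_def[of f a] by (rule tw_sum_left[symmetric]) (use fa fs fL in auto)
  qed
  finally show "lin_ext f (tw_mult comb coef a b) v = tw_mult comb' coef' (lin_ext f a) (lin_ext f b) v" .
qed

definition is_ideal_over :: "(('b \<Rightarrow> complex) \<Rightarrow> ('b \<Rightarrow> complex) \<Rightarrow> 'b \<Rightarrow> complex)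
    \<Rightarrow> ('b \<Rightarrow> complex) set \<Rightarrow> ('b \<Rightarrow> complex) set \<Rightarrow> ('b \<Rightarrow> complex) set \<Rightarrow> bool" where
  "is_ideal_over mul A R J \<longleftrightarrow> R \<subseteq> J \<and> J \<subseteq> A \<and> (\<lambda>_. 0) \<in> J
      \<and> (\<forall>a\<in>J. \<forall>b\<in>J. (\<lambda>x. a x + b x) \<in> J)
      \<and> (\<forall>c. \<forall>a\<in>J. (\<lambda>x. c * a x) \<in> J)
      \<and> (\<forall>a\<in>A. \<forall>j\<in>J. mul a j \<in> J \<and> mul j a \<in> J)"

lemma ideal_gen_iff: "x \<in> ideal_gen mul A R \<longleftrightarrow> (\<forall>J. is_ideal_over mul A R J \<longrightarrow> x \<in> J)"
  unfolding ideal_gen_def is_ideal_over_def by blast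

lemma ideal_gen_least: "is_ideal_over mul A R K \<Longrightarrow> ideal_gen mul A R \<subseteq> K"
  by (auto simp: ideal_gen_iff)

lemma ideal_gen_gens: "x \<in> R \<Longrightarrow> x \<in> ideal_gen mul A R"
  unfolding ideal_gen_iff is_ideal_over_def by blast

lemma ideal_gen_zero: "(\<lambda>_. 0) \<in> ideal_gen mul A R"
  unfolding ideal_gen_iff is_ideal_over_def by blast

lemma ideal_gen_add:
  "a \<in> ideal_gen mul A R \<Longrightarrow> b \<in> ideal_gen mul A R \<Longrightarrow> (\<lambda>x. a x + b x) \<in> ideal_gen mul A R"
  unfolding ideal_gen_iff is_ideal_over_def by blast

lemma ideal_gen_scale: "a \<in> ideal_gen mul A R \<Longrightarrow> (\<lambda>x. c * a x) \<in> ideal_gen mul A R"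
  unfolding ideal_gen_iff is_ideal_over_def by blast

lemma ideal_gen_mult_left: "a \<in> A \<Longrightarrow> j \<in> ideal_gen mul A R \<Longrightarrow> mul a j \<in> ideal_gen mul A R"
  unfolding ideal_gen_iff is_ideal_over_def by blast

lemma ideal_gen_mult_right: "a \<in> A \<Longrightarrow> j \<in> ideal_gen mul A R \<Longrightarrow> mul j a \<in> ideal_gen mul A R"
  unfolding ideal_gen_iff is_ideal_over_def by blast

lemma sum_split_ends:
  fixes f :: "nat \<Rightarrow> int" assumes n3: "n \<ge> 3"
  shows "(\<Sum>k\<in>{1..n-2}. f k) = f 1 + (\<Sum>k\<in>{2..n-2}. f k)"
    and "(\<Sum>k\<in>{1..n-2}. f (k+1)) = (\<Sum>k\<in>{2..n-2}. f k) + f (n - 1)"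
proof -
  show "(\<Sum>k\<in>{1..n-2}. f k) = f 1 + (\<Sum>k\<in>{2..n-2}. f k)"
    using n3 by (subst sum.atLeast_Suc_atMost) (auto simp: numeral_2_eq_2)
  have "(\<Sum>k\<in>{1..n-2}. f (k+1)) = (\<Sum>k\<in>{Suc 1..Suc (n-2)}. f k)"
    by (subst sum.shift_bounds_cl_Suc_ivl) simp
  also have "\<dots> = (\<Sum>k\<in>{2..n-2}. f k) + f (n - 1)"
    using n3 by (subst sum.cl_ivl_Suc) (auto simp: numeral_2_eq_2 Suc_diff_Suc)
  finally show "(\<Sum>k\<in>{1..n-2}. f (k+1)) = (\<Sum>k\<in>{2..n-2}. f k) + f (n - 1)" .
qed

section \<open>Roots of unity and the group G\<close>

locale prim_root =
  fixes l :: nat and z :: complex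
  assumes l2: "l \<ge> 2" and zl: "z ^ l = 1" and prim: "\<forall>k. 0 < k \<and> k < l \<longrightarrow> z ^ k \<noteq> 1"
begin

lemma z_nz: "z \<noteq> 0"
proof
  assume "z = 0" then have "z ^ l = 0" using l2 by simp
  with zl show False by simp
qed

lemma z_ne1: "z \<noteq> 1"
  using prim l2 by auto

lemma zpow_inj: assumes "a < l" "b < l" "z ^ a = z ^ b" shows "a = b"
proof -
  have no_gap: False if ab: "a < b" "b < l" "z ^ a = z ^ b" for a b :: nat
  proof -
    have "z ^ b = z ^ a * z ^ (b - a)" using ab by (metis le_add_diff_inverse less_imp_le power_add)
    then have "z ^ (b - a) = 1" using ab z_nz by simp
    with prim ab show False by force
  qed
  show ?thesis using no_gap[of a b] no_gap[of b a] assms by (metis linorder_neqE_nat)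
qed

lemma zpowi_nat: "z powi a = z ^ nat (a mod int l)"
proof -
  have "z powi a = z powi (int l * (a div int l)) * z powi (a mod int l)"
    by (metis div_mult_mod_eq mult.commute power_int_add z_nz)
  also have "z powi (int l * (a div int l)) = 1"
    by (simp add: power_int_mult zl)
  also have "a mod int l = int (nat (a mod int l))" using l2 by simp
  finally show ?thesis by (metis mult_1 power_int_of_nat)
qed

lemma zpowi_eq: "z powi a = z powi b \<longleftrightarrow> [a = b] (mod int l)"
proof
  assume "z powi a = z powi b"
  then have "z ^ nat (a mod int l) = z ^ nat (b mod int l)" by (simp add: zpowi_nat)
  then have "nat (a mod int l) = nat (b mod int l)"
    by (rule zpow_inj[rotated 2]) (use l2 in \<open>simp_all add: nat_less_iff\<close>)
  moreover have "a mod int l \<ge> 0" "b mod int l \<ge> 0" using l2 by auto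
  ultimately show "[a = b] (mod int l)" unfolding cong_def by (metis nat_eq_iff2)
next
  assume "[a = b] (mod int l)"
  then show "z powi a = z powi b" by (simp add: zpowi_nat cong_def)
qed

lemma zpowi_add: "z powi a * z powi b = z powi (a + b)"
  by (simp add: power_int_add z_nz)

lemma zpowi_inv: "inverse (z powi a) = z powi (- a)"
  by (simp add: power_int_minus)

lemma root_is_power: assumes "c ^ l = 1" shows "\<exists>m<l. c = z ^ m"
proof -
  have l0: "l > 0" using l2 by simp
  have "(z ^ m) ^ l = 1" for m by (metis power_mult mult.commute power_one zl)
  then have sub: "(\<lambda>m. z ^ m) ` {..<l} \<subseteq> {c. c ^ l = 1}" by auto
  have inj: "inj_on (\<lambda>m. z ^ m) {..<l}" by (auto intro!: inj_onI zpow_inj)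
  have "card ((\<lambda>m. z ^ m) ` {..<l}) = card {c::complex. c ^ l = 1}"
    using card_image[OF inj] card_roots_unity_eq[OF l0] by simp
  then have "(\<lambda>m. z ^ m) ` {..<l} = {c. c ^ l = 1}"
    by (intro card_subset_eq sub finite_roots_unity) (use l0 in auto)
  with assms show ?thesis by auto
qed

end

locale diag_group = prim_root l z for l z +
  fixes n :: nat
  assumes n3: "n \<ge> 3"
begin

abbreviation G where "G \<equiv> Gset n l"

lemma succ_in: "j \<in> {1..n} \<Longrightarrow> succ_idx n j \<in> {1..n}"
  using n3 by (auto simp: succ_idx_def)

lemma succ_ne: "j \<in> {1..n} \<Longrightarrow> succ_idx n j \<noteq> j"
  using n3 by (auto simp: succ_idx_def)

lemma succ_succ_ne: "i \<in> {1..n} \<Longrightarrow> succ_idx n (succ_idx n i) \<noteq> i"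
  using n3 unfolding succ_idx_def by auto

lemma succ_inj: "i \<in> {1..n} \<Longrightarrow> j \<in> {1..n} \<Longrightarrow> succ_idx n i = succ_idx n j \<longleftrightarrow> i = j"
  unfolding succ_idx_def by (cases "i = n"; cases "j = n") auto

lemma G_prod: "g \<in> G \<Longrightarrow> (\<Prod>j\<in>{1..n}. g j) = 1"
  unfolding Gset_def by blast

lemma G_out: "g \<in> G \<Longrightarrow> j \<notin> {1..n} \<Longrightarrow> g j = 1"
  unfolding Gset_def by blast

lemma G_pow: "g \<in> G \<Longrightarrow> g j ^ l = 1"
  unfolding Gset_def by (cases "j \<in> {1..n}") auto

lemma G_nz: assumes "g \<in> G" shows "g j \<noteq> 0"
proof
  assume "g j = 0" then have "g j ^ l = 0" using l2 by simp
  with G_pow[OF assms, of j] show False by simp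
qed

lemma gone_G: "gone \<in> G"
  unfolding Gset_def gone_def by simp

lemma gmul_G: assumes "g \<in> G" "h \<in> G" shows "gmul g h \<in> G"
  using assms unfolding Gset_def gmul_def by (auto simp: power_mult_distrib prod.distrib)

lemma gpow_G: assumes g: "g \<in> G" shows "(\<lambda>j. g j ^ m) \<in> G"
proof -
  have "(g j ^ m) ^ l = (g j ^ l) ^ m" for j by (simp only: mult.commute flip: power_mult)
  then show ?thesis using g unfolding Gset_def by (auto simp flip: prod_power_distrib)
qed

lemma gmul_comm: "gmul g h = gmul h g" by (auto simp: gmul_def)
lemma gmul_assoc: "gmul (gmul g h) k = gmul g (gmul h k)" by (auto simp: gmul_def)
lemma gmul_one: "gmul gone g = g" "gmul g gone = g" by (auto simp: gmul_def gone_def)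

lemma G_prod_powers:
  assumes "finite K" "\<And>k. k \<in> K \<Longrightarrow> f k \<in> G" shows "(\<lambda>j. \<Prod>k\<in>K. f k j ^ e k) \<in> G"
  using assms
proof (induction K rule: finite_induct)
  case empty then show ?case using gone_G by (simp add: gone_def)
next
  case (insert x K)
  have "(\<lambda>j. \<Prod>k\<in>insert x K. f k j ^ e k) = gmul (\<lambda>j. f x j ^ e x) (\<lambda>j. \<Prod>k\<in>K. f k j ^ e k)"
    using insert by (simp add: gmul_def)
  then show ?case using insert by (simp add: gmul_G gpow_G)
qed

lemma gen_val: assumes "k \<in> {1..n}" "j \<in> {1..n}"
  shows "gen n z k j = (if j = k then z else if j = succ_idx n k then inverse z else 1)"
  using assms unfolding gen_def by simp

lemma gen_G: assumes k: "k \<in> {1..n}" shows "gen n z k \<in> G"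
proof -
  have sk: "succ_idx n k \<in> {1..n}" "succ_idx n k \<noteq> k" using succ_in[OF k] succ_ne[OF k] by auto
  have "gen n z k j ^ l = 1" for j
  proof (cases "j \<in> {1..n}")
    case True then show ?thesis using zl by (simp add: gen_val[OF k True] power_inverse)
  next
    case False then show ?thesis unfolding gen_def by (simp only: if_not_P[OF False]) simp
  qed
  moreover have "j \<notin> {1..n} \<Longrightarrow> gen n z k j = 1" for j unfolding gen_def by (rule if_not_P)
  moreover have "(\<Prod>j\<in>{1..n}. gen n z k j) = 1"
  proof -
    have "(\<Prod>j\<in>{1..n}. gen n z k j)
        = (\<Prod>j\<in>{1..n}. (if j = k then z else 1) * (if j = succ_idx n k then inverse z else 1))"
      by (rule prod.cong[OF refl]) (use sk in \<open>auto simp: gen_val[OF k]\<close>)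
    also have "\<dots> = z * inverse z" using k sk by (simp add: prod.distrib)
    finally show ?thesis using z_nz by simp
  qed
  ultimately show ?thesis unfolding Gset_def by blast
qed

lemma gword_G: "gword n z e \<in> G"
  unfolding gword_def by (rule G_prod_powers) (auto intro: gen_G)

lemma G_eq_by_prefix:
  assumes g: "g \<in> G" and h: "h \<in> G"
    and pre: "\<And>k. k \<le> n - 1 \<Longrightarrow> (\<Prod>j\<in>{1..k}. g j) = (\<Prod>j\<in>{1..k}. h j)"
  shows "g = h"
proof
  fix j
  have pre': "(\<Prod>i\<in>{1..k}. g i) = (\<Prod>i\<in>{1..k}. h i)" if "k \<le> n" for k
    using pre[of k] G_prod[OF g] G_prod[OF h] that by (cases "k = n") auto
  show "g j = h j"
  proof (cases "j \<in> {1..n}")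
    case True
    have jj: "j = Suc (j - 1)" using True by auto
    have split: "(\<Prod>i\<in>{1..j}. f i) = (\<Prod>i\<in>{1..j-1}. f i) * f j" for f :: "nat \<Rightarrow> complex"
      by (subst jj, subst prod.cl_ivl_Suc) (use True in auto)
    have "j - 1 \<le> n" using True by (simp add: le_diff_conv)
    then have prev: "(\<Prod>i\<in>{1..j-1}. g i) = (\<Prod>i\<in>{1..j-1}. h i)" by (rule pre')
    have nz: "(\<Prod>i\<in>{1..j-1}. g i) \<noteq> 0" using G_nz[OF g] by (simp add: prod_zero_iff)
    have "(\<Prod>i\<in>{1..j-1}. g i) * g j = (\<Prod>i\<in>{1..j}. g i)" by (rule split[symmetric])
    also have "\<dots> = (\<Prod>i\<in>{1..j}. h i)" using pre' True by simp
    also have "\<dots> = (\<Prod>i\<in>{1..j-1}. h i) * h j" by (rule split)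
    also have "\<dots> = (\<Prod>i\<in>{1..j-1}. g i) * h j" using prev by simp
    finally show ?thesis using nz by simp
  next
    case False then show ?thesis using G_out[OF g False] G_out[OF h False] by simp
  qed
qed

lemma gword_in:
  assumes j: "j \<in> {1..n}"
  shows "gword n z e j = (if j \<in> {1..n-1} then z ^ e j else 1)
                       * (if j - 1 \<in> {1..n-1} then inverse z ^ e (j - 1) else 1)"
proof -
  have "gen n z k j ^ e k = (if k = j then z ^ e k else 1) * (if k = j - 1 then inverse z ^ e k else 1)"
    if k: "k \<in> {1..n-1}" for k
  proof -
    have "succ_idx n k = k + 1" using k n3 by (auto simp: succ_idx_def)
    moreover have "k = j - 1 \<longleftrightarrow> j = k + 1" using j k by auto
    ultimately show ?thesis using k j n3 by (auto simp: gen_val)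
  qed
  then have "gword n z e j = (\<Prod>k\<in>{1..n-1}. (if k = j then z ^ e k else 1)
                                          * (if k = j - 1 then inverse z ^ e k else 1))"
    unfolding gword_def by (rule prod.cong[OF refl])
  then show ?thesis by (simp only: prod.distrib prod.delta finite_atLeastAtMost)
qed

text \<open>The prefix products of g_1^(e 1) ... g_(n-1)^(e (n-1)) telescope to z^(e k).\<close>
lemma gword_prefix:
  assumes e0: "\<forall>k. k \<notin> {1..n-1} \<longrightarrow> e k = 0"
  shows "k \<le> n - 1 \<Longrightarrow> (\<Prod>j\<in>{1..k}. gword n z e j) = z ^ e k"
proof (induction k)
  case 0 then show ?case using e0 by simp
next
  case (Suc k)
  have sk: "Suc k \<in> {1..n}" "Suc k \<in> {1..n-1}" using Suc.prems by auto
  have gs: "gword n z e (Suc k) = z ^ e (Suc k) * inverse z ^ e k"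
    using gword_in[OF sk(1), of e] sk e0 by (cases "k \<in> {1..n-1}") auto
  have "(\<Prod>j\<in>{1..Suc k}. gword n z e j) = z ^ e k * (z ^ e (Suc k) * inverse (z ^ e k))"
    using Suc gs by (simp add: power_inverse)
  also have "\<dots> = z ^ e (Suc k)" using z_nz by simp
  finally show ?case .
qed

text \<open>Every g \<in> G is a word g_1^(e 1) ... g_(n-1)^(e (n-1)) in the generators, with
  exponents e k < l read off from the prefix products of g.\<close>
lemma gword_exists:
  assumes g: "g \<in> G"
  shows "\<exists>e. (\<forall>k. e k < l) \<and> (\<forall>k. k \<notin> {1..n-1} \<longrightarrow> e k = 0) \<and> gword n z e = g"
proof -
  have "\<forall>k. \<exists>m. m < l \<and> (\<Prod>j\<in>{1..k}. g j) = z ^ m"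
    using root_is_power G_pow[OF g] by (simp add: prod_power_distrib)
  then obtain m where m: "\<forall>k. m k < l \<and> (\<Prod>j\<in>{1..k}. g j) = z ^ m k"
    by (auto dest!: choice)
  define e where "e k = (if k \<in> {1..n-1} then m k else 0)" for k
  have e0: "\<forall>k. k \<notin> {1..n-1} \<longrightarrow> e k = 0" by (simp add: e_def)
  have "gword n z e = g"
  proof (rule G_eq_by_prefix[OF gword_G g])
    fix k assume k: "k \<le> n - 1"
    show "(\<Prod>j\<in>{1..k}. gword n z e j) = (\<Prod>j\<in>{1..k}. g j)"
    proof (cases "k = 0")
      case False
      then have "e k = m k" using k by (simp add: e_def)
      then show ?thesis using gword_prefix[OF e0 k] m by simp
    qed simp
  qed
  moreover have "\<forall>k. e k < l" using m l2 by (simp add: e_def)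
  ultimately show ?thesis using e0 by blast
qed

lemma gword_unique:
  assumes "\<forall>k. e k < l" "\<forall>k. k \<notin> {1..n-1} \<longrightarrow> e k = 0"
    and "\<forall>k. e' k < l" "\<forall>k. k \<notin> {1..n-1} \<longrightarrow> e' k = 0"
    and "gword n z e = gword n z e'"
  shows "e = e'"
proof
  fix k show "e k = e' k"
  proof (cases "k \<in> {1..n-1}")
    case True
    then have "z ^ e k = z ^ e' k"
      using gword_prefix[of e k] gword_prefix[of e' k] assms by auto
    then show ?thesis using assms zpow_inj by blast
  qed (use assms in auto)
qed

lemma coords_spec:
  assumes "g \<in> G"
  shows "(\<forall>k. coords n l z g k < l) \<and> (\<forall>k. k \<notin> {1..n-1} \<longrightarrow> coords n l z g k = 0)
         \<and> gword n z (coords n l z g) = g"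
proof -
  obtain e where e: "(\<forall>k. e k < l) \<and> (\<forall>k. k \<notin> {1..n-1} \<longrightarrow> e k = 0) \<and> gword n z e = g"
    using gword_exists[OF assms] by blast
  show ?thesis unfolding coords_def
    by (rule theI[of _ e]) (use e gword_unique in blast)+
qed

abbreviation icoord :: "(nat \<Rightarrow> complex) \<Rightarrow> nat \<Rightarrow> int" where
  "icoord g k \<equiv> int (coords n l z g k)"

lemma coords_lt: "g \<in> G \<Longrightarrow> coords n l z g k < l"
  using coords_spec by blast

lemma coords_out: "g \<in> G \<Longrightarrow> k \<notin> {1..n-1} \<Longrightarrow> coords n l z g k = 0"
  using coords_spec by blast

lemma coords_0: "g \<in> G \<Longrightarrow> coords n l z g 0 = 0"
  using coords_out by auto

lemma coords_n: "g \<in> G \<Longrightarrow> coords n l z g n = 0"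
  using coords_out n3 by auto

lemma prefix_coords:
  assumes g: "g \<in> G" and k: "k \<le> n"
  shows "(\<Prod>j\<in>{1..k}. g j) = z ^ coords n l z g k"
proof (cases "k = n")
  case True then show ?thesis using G_prod[OF g] coords_n[OF g] by simp
next
  case False
  then show ?thesis using gword_prefix[of "coords n l z g" k] coords_spec[OF g] k by auto
qed

lemma G_val:
  assumes g: "g \<in> G" and j: "j \<in> {1..n}"
  shows "g j = z powi (icoord g j - icoord g (j - 1))"
proof -
  have jj: "j = Suc (j - 1)" using j by auto
  have "(\<Prod>i\<in>{1..j}. g i) = (\<Prod>i\<in>{1..j-1}. g i) * g j"
    by (subst jj, subst prod.cl_ivl_Suc) (use j in auto)
  moreover have "j - 1 \<le> n" "j \<le> n" using j by auto
  ultimately have "z ^ coords n l z g j = z ^ coords n l z g (j - 1) * g j"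
    using prefix_coords[OF g] by metis
  then show ?thesis using z_nz by (simp add: power_int_diff field_simps)
qed

lemma coords_mul:
  assumes g: "g \<in> G" and h: "h \<in> G"
  shows "[icoord (gmul g h) k = icoord g k + icoord h k] (mod int l)"
proof (cases "k \<le> n")
  case True
  have "z ^ coords n l z (gmul g h) k = (\<Prod>j\<in>{1..k}. g j * h j)"
    using prefix_coords[OF gmul_G[OF g h] True] by (simp add: gmul_def)
  also have "\<dots> = z ^ coords n l z g k * z ^ coords n l z h k"
    using prefix_coords[OF g True] prefix_coords[OF h True] by (simp add: prod.distrib)
  finally have "z powi (icoord (gmul g h) k) = z powi (icoord g k + icoord h k)"
    by (simp flip: zpowi_add)
  then show ?thesis using zpowi_eq by blast
next
  case False
  then show ?thesis using coords_out[OF g] coords_out[OF h] coords_out[OF gmul_G[OF g h]]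
    by (simp add: cong_def)
qed

lemma coords_character_mul:
  assumes "g \<in> G" "h \<in> G"
  shows "z powi (\<Sum>i\<in>K. icoord (gmul g h) (s i) * c i)
       = z powi (\<Sum>i\<in>K. icoord g (s i) * c i) * z powi (\<Sum>i\<in>K. icoord h (s i) * c i)"
proof -
  have "[(\<Sum>i\<in>K. icoord (gmul g h) (s i) * c i) = (\<Sum>i\<in>K. (icoord g (s i) + icoord h (s i)) * c i)] (mod int l)"
    by (intro cong_sum cong_mult coords_mul assms cong_refl)
  then show ?thesis
    unfolding zpowi_add zpowi_eq by (simp add: sum.distrib algebra_simps)
qed

lemma coords_one: "coords n l z gone k = 0"
proof (cases "k \<le> n")
  case True
  have "z ^ coords n l z gone k = z ^ 0" using prefix_coords[OF gone_G True] by (simp add: gone_def)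
  then show ?thesis using zpow_inj[OF coords_lt[OF gone_G]] l2 by simp
next
  case False then show ?thesis using coords_out[OF gone_G] by simp
qed

lemma alpha_eq: "alpha n l z g h = inverse (z powi (\<Sum>k\<in>{1..n-2}. icoord g k * icoord h (k+1)))"
  by (simp add: alpha_def zpowi_inv)

lemma alpha_mul_left:
  assumes "g \<in> G" "h \<in> G" "k \<in> G"
  shows "alpha n l z (gmul g h) k = alpha n l z g k * alpha n l z h k"
  using coords_character_mul[OF assms(1,2), where K="{1..n-2}" and s=id and c="\<lambda>i. icoord k (Suc i)"]
  unfolding alpha_eq by simp

lemma alpha_mul_right:
  assumes "g \<in> G" "h \<in> G" "k \<in> G"
  shows "alpha n l z k (gmul g h) = alpha n l z k g * alpha n l z k h"
  using coords_character_mul[OF assms(1,2), where K="{1..n-2}" and s=Suc and c="icoord k"]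
  unfolding alpha_eq by (simp add: mult.commute)

lemma alpha_one: "alpha n l z gone h = 1" "alpha n l z h gone = 1"
  by (simp_all add: alpha_def coords_one)

text \<open>alpha is a bicharacter, hence a 2-cocycle on G.\<close>
lemma alpha_cocycle:
  assumes "g \<in> G" "h \<in> G" "k \<in> G"
  shows "alpha n l z g h * alpha n l z (gmul g h) k = alpha n l z h k * alpha n l z g (gmul h k)"
  using assms by (simp add: alpha_mul_left alpha_mul_right)

lemma yact_eq: "yact n l z g p = z powi (\<Sum>k\<in>{1..n-1}. icoord g k * (p k - p (k+1)))"
  by (simp add: yact_def)

lemma yact_add: "yact n l z g (\<lambda>i. p i + q i) = yact n l z g p * yact n l z g q"
  unfolding yact_eq zpowi_add sum.distrib[symmetric]
  by (rule arg_cong[where f="power_int z"], rule sum.cong) (simp_all add: algebra_simps)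

lemma yact_zero: "yact n l z g (\<lambda>_. 0) = 1"
  by (simp add: yact_def)

lemma yact_one: "yact n l z gone p = 1"
  by (simp add: yact_def coords_one)

lemma yact_mul:
  assumes "g \<in> G" "h \<in> G"
  shows "yact n l z (gmul g h) p = yact n l z g p * yact n l z h p"
  unfolding yact_eq using coords_character_mul[OF assms, where s=id] by simp

lemma yact_single:
  assumes g: "g \<in> G" and s: "s \<in> {1..n}"
  shows "yact n l z g (\<lambda>i. if i = s then v else 0) = g s powi v"
proof -
  have summand: "icoord g k * ((if k = s then v else 0) - (if k + 1 = s then v else 0))
        = v * ((if k = s then icoord g k else 0) - (if k = s - 1 then icoord g k else 0))"
    if "k \<in> {1..n-1}" for k
    using that s by (cases "k = s"; cases "k + 1 = s") auto
  have "(\<Sum>k\<in>{1..n-1}. icoord g k * ((if k = s then v else 0) - (if k + 1 = s then v else 0)))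
      = v * ((\<Sum>k\<in>{1..n-1}. if k = s then icoord g k else 0)
             - (\<Sum>k\<in>{1..n-1}. if k = s - 1 then icoord g k else 0))"
    by (simp only: sum.cong[OF refl summand] sum_distrib_left[symmetric] sum_subtractf)
  also have "(\<Sum>k\<in>{1..n-1}. if k = s then icoord g k else 0) = icoord g s"
    using coords_n[OF g] s by (cases "s = n") auto
  also have "(\<Sum>k\<in>{1..n-1}. if k = s - 1 then icoord g k else 0) = icoord g (s - 1)"
    using coords_0[OF g] s by auto
  finally have "yact n l z g (\<lambda>i. if i = s then v else 0) = z powi ((icoord g s - icoord g (s - 1)) * v)"
    unfolding yact_eq by (simp add: mult.commute)
  also have "\<dots> = g s powi v" using G_val[OF g s] by (simp add: power_int_mult)
  finally show ?thesis .
qed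

text \<open>Coordinates of the generators: g_j has the unit vector e_j for j < n, while
  g_n = (g_1 \<cdots> g_(n-1))^(-1) has all coordinates l - 1.\<close>
lemma coords_gen_lt:
  assumes j: "j \<in> {1..n-1}"
  shows "coords n l z (gen n z j) k = (if k = j then 1 else 0)"
proof (cases "k \<le> n")
  case True
  have jn: "j \<in> {1..n}" "succ_idx n j = j + 1" using j n3 by (auto simp: succ_idx_def)
  have "(\<Prod>i\<in>{1..k}. gen n z j i) = (\<Prod>i\<in>{1..k}. (if i = j then z else 1) * (if i = j + 1 then inverse z else 1))"
    by (rule prod.cong[OF refl]) (use True jn in \<open>auto simp: gen_val\<close>)
  also have "\<dots> = (if j \<in> {1..k} then z else 1) * (if j + 1 \<in> {1..k} then inverse z else 1)"
    by (simp only: prod.distrib prod.delta finite_atLeastAtMost)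
  also have "\<dots> = z ^ (if k = j then 1 else 0)"
    using j z_nz by auto
  finally have "z ^ coords n l z (gen n z j) k = z ^ (if k = j then 1 else 0)"
    using prefix_coords[OF gen_G[OF jn(1)] True] by simp
  then show ?thesis
    by (rule zpow_inj[OF coords_lt[OF gen_G[OF jn(1)]], rotated]) (use l2 in auto)
next
  case False then show ?thesis using coords_out[OF gen_G] j by auto
qed

lemma coords_gen_n:
  "coords n l z (gen n z n) k = (if k \<in> {1..n-1} then l - 1 else 0)"
proof (cases "k \<le> n")
  case True
  have jn: "n \<in> {1..n}" "succ_idx n n = 1" using n3 by (auto simp: succ_idx_def)
  have "(\<Prod>i\<in>{1..k}. gen n z n i) = (\<Prod>i\<in>{1..k}. (if i = n then z else 1) * (if i = 1 then inverse z else 1))"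
    by (rule prod.cong[OF refl]) (use True jn n3 in \<open>auto simp: gen_val\<close>)
  also have "\<dots> = (if n \<in> {1..k} then z else 1) * (if 1 \<in> {1..k} then inverse z else 1)"
    by (simp only: prod.distrib prod.delta finite_atLeastAtMost)
  also have "\<dots> = z ^ (if k \<in> {1..n-1} then l - 1 else 0)"
  proof -
    have zi: "z ^ (l - 1) = inverse z"
    proof -
      have "z * z ^ (l - 1) = 1" using zl l2 by (metis One_nat_def Suc_diff_1 not_numeral_le_zero not_gr0 power_Suc)
      then show ?thesis by (metis inverse_unique)
    qed
    show ?thesis using True n3 zi z_nz by auto
  qed
  finally have "z ^ coords n l z (gen n z n) k = z ^ (if k \<in> {1..n-1} then l - 1 else 0)"
    using prefix_coords[OF gen_G[OF jn(1)] True] by simp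
  then show ?thesis
    by (rule zpow_inj[OF coords_lt[OF gen_G[OF jn(1)]], rotated]) (use l2 in auto)
next
  case False then show ?thesis using coords_out[OF gen_G, of n k] n3 by auto
qed

lemma gen_cross:
  assumes i: "i \<in> {1..n}" and j: "j \<in> {1..n}"
  shows "gen n z i j * gen n z j (succ_idx n i) = 1"
proof -
  have si: "succ_idx n i \<in> {1..n}" "succ_idx n i \<noteq> i" using succ_in[OF i] succ_ne[OF i] by auto
  have sj: "succ_idx n j \<noteq> j" using succ_ne[OF j] .
  have inj: "succ_idx n i = succ_idx n j \<longleftrightarrow> i = j" using succ_inj[OF i j] by auto
  show ?thesis
    using si sj inj z_nz by (auto simp: gen_val[OF i j] gen_val[OF j si(1)])
qed

text \<open>This is what makes
  g \<cdot> Theta(x_j) = g(x_j) \<cdot> Theta(x_j) \<cdot> g.\<close>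
lemma alpha_commute_gen_lt:
  assumes g: "g \<in> G" and j': "j \<in> {1..n-1}"
  shows "alpha n l z g (gen n z j) * inverse (g (succ_idx n j)) = g j * alpha n l z (gen n z j) g"
proof -
  have j: "j \<in> {1..n}" using j' by auto
  have sj: "succ_idx n j = j + 1" "j + 1 \<in> {1..n}" using j' n3 by (auto simp: succ_idx_def)
  have S1: "(\<Sum>k\<in>{1..n-2}. icoord g k * icoord (gen n z j) (k+1)) = icoord g (j - 1)"
  proof -
    have "(\<Sum>k\<in>{1..n-2}. icoord g k * icoord (gen n z j) (k+1)) = (\<Sum>k\<in>{1..n-2}. if k = j - 1 then icoord g k else 0)"
      by (rule sum.cong[OF refl]) (use j' in \<open>auto simp: coords_gen_lt\<close>)
    also have "\<dots> = icoord g (j - 1)" using j' coords_0[OF g] by auto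
    finally show ?thesis .
  qed
  have S2: "(\<Sum>k\<in>{1..n-2}. icoord (gen n z j) k * icoord g (k+1)) = icoord g (j + 1)"
  proof -
    have "(\<Sum>k\<in>{1..n-2}. icoord (gen n z j) k * icoord g (k+1)) = (\<Sum>k\<in>{1..n-2}. if k = j then icoord g (k+1) else 0)"
      by (rule sum.cong[OF refl]) (use j' in \<open>auto simp: coords_gen_lt\<close>)
    also have "\<dots> = icoord g (j + 1)" using j' coords_n[OF g] n3
      by (cases "j = n - 1") auto
    finally show ?thesis .
  qed
  have "alpha n l z g (gen n z j) * inverse (g (succ_idx n j))
      = z powi (- icoord g (j - 1)) * inverse (z powi (icoord g (j+1) - icoord g j))"
    unfolding alpha_def S1 sj(1) using G_val[OF g sj(2)] by simp
  also have "\<dots> = z powi (icoord g j - icoord g (j - 1) - icoord g (j+1))"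
    unfolding zpowi_inv zpowi_add by (simp add: algebra_simps)
  also have "\<dots> = z powi (icoord g j - icoord g (j - 1)) * z powi (- icoord g (j+1))"
    unfolding zpowi_add by (simp add: algebra_simps)
  also have "\<dots> = g j * alpha n l z (gen n z j) g"
    unfolding alpha_def S2 using G_val[OF g j] by simp
  finally show ?thesis .
qed

lemma alpha_commute_gen_n:
  assumes g: "g \<in> G"
  shows "alpha n l z g (gen n z n) * inverse (g (succ_idx n n)) = g n * alpha n l z (gen n z n) g"
proof -
  have sn: "succ_idx n n = 1" by (simp add: succ_idx_def)
  define L where "L = int (l - 1)"
  have S1: "(\<Sum>k\<in>{1..n-2}. icoord g k * icoord (gen n z n) (k+1)) = L * (\<Sum>k\<in>{1..n-2}. icoord g k)"
    unfolding sum_distrib_left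
    by (rule sum.cong[OF refl]) (use n3 in \<open>auto simp: coords_gen_n L_def\<close>)
  have S2: "(\<Sum>k\<in>{1..n-2}. icoord (gen n z n) k * icoord g (k+1)) = L * (\<Sum>k\<in>{1..n-2}. icoord g (k+1))"
    unfolding sum_distrib_left
    by (rule sum.cong[OF refl]) (use n3 in \<open>auto simp: coords_gen_n L_def\<close>)
  define T where "T = (\<Sum>k\<in>{2..n-2}. icoord g k)"
  have T1: "(\<Sum>k\<in>{1..n-2}. icoord g k) = icoord g 1 + T"
    and T2: "(\<Sum>k\<in>{1..n-2}. icoord g (k+1)) = T + icoord g (n - 1)"
    unfolding T_def using sum_split_ends[OF n3, of "\<lambda>k. icoord g k"] by simp_all
  have g1: "g 1 = z powi icoord g 1" using G_val[OF g, of 1] coords_0[OF g] n3 by simp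
  have gn: "g n = z powi (- icoord g (n - 1))" using G_val[OF g, of n] coords_n[OF g] n3 by simp
  have "alpha n l z g (gen n z n) * inverse (g (succ_idx n n)) = z powi (- (L * (icoord g 1 + T)) - icoord g 1)"
    unfolding alpha_def S1 T1 sn g1 zpowi_inv zpowi_add by (simp add: algebra_simps)
  also have "\<dots> = z powi (- icoord g (n - 1) - L * (T + icoord g (n - 1)))"
  proof -
    have "int l = L + 1" using l2 by (simp add: L_def)
    then have "(- (L * (icoord g 1 + T)) - icoord g 1) - (- icoord g (n - 1) - L * (T + icoord g (n - 1))) = int l * (icoord g (n-1) - icoord g 1)"
      by (simp add: algebra_simps)
    then have "[- (L * (icoord g 1 + T)) - icoord g 1 = - icoord g (n - 1) - L * (T + icoord g (n - 1))] (mod int l)"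
      unfolding cong_iff_dvd_diff by simp
    then show ?thesis using zpowi_eq by blast
  qed
  also have "\<dots> = g n * alpha n l z (gen n z n) g"
    unfolding alpha_def S2 T2 gn zpowi_add by (rule arg_cong[where f="power_int z"]) (simp add: algebra_simps)
  finally show ?thesis .
qed

lemma alpha_commute_gen:
  assumes g: "g \<in> G" and j: "j \<in> {1..n}"
  shows "alpha n l z g (gen n z j) * inverse (g (succ_idx n j)) = g j * alpha n l z (gen n z j) g"
  using alpha_commute_gen_lt[OF g] alpha_commute_gen_n[OF g] j by (cases "j = n") auto
end

section \<open>The algebras and the map Theta\<close>

text \<open>The product of C[y^(+-1)] #_alpha G in terms of basis data:
  y^p g \<cdot> y^q h = alpha(g,h) (g \<cdot> y^q) y^(p+q) gh.\<close>
definition tcomb :: "(nat \<Rightarrow> int) \<times> (nat \<Rightarrow> complex) \<Rightarrow> (nat \<Rightarrow> int) \<times> (nat \<Rightarrow> complex)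
                     \<Rightarrow> (nat \<Rightarrow> int) \<times> (nat \<Rightarrow> complex)" where
  "tcomb = (\<lambda>(p, g) (p', h). (\<lambda>i. p i + p' i, gmul g h))"

definition tcoef :: "nat \<Rightarrow> nat \<Rightarrow> complex \<Rightarrow> (nat \<Rightarrow> int) \<times> (nat \<Rightarrow> complex)
                     \<Rightarrow> (nat \<Rightarrow> int) \<times> (nat \<Rightarrow> complex) \<Rightarrow> complex" where
  "tcoef n l z = (\<lambda>(p, g) (p', h). alpha n l z g h * yact n l z g p')"

lemma tmul_eq: "tmul n l z = tw_mult tcomb (tcoef n l z)"
  by (simp add: tmul_def tcomb_def tcoef_def)

abbreviation ymono :: "(nat \<Rightarrow> int) \<Rightarrow> (nat \<Rightarrow> complex) \<Rightarrow> (nat \<Rightarrow> int) \<times> (nat \<Rightarrow> complex) \<Rightarrow> complex"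
  where "ymono p g \<equiv> basis_el (p, g)"

definition evec :: "nat \<Rightarrow> int \<Rightarrow> nat \<Rightarrow> int" where
  "evec j v = (\<lambda>i. if i = j then v else 0)"

lemma Tbasis_iff: "(p, g) \<in> Tbasis n l \<longleftrightarrow> (\<forall>i. i \<notin> {1..n} \<longrightarrow> p i = 0) \<and> g \<in> Gset n l"
  by (simp add: Tbasis_def)

lemma Sbasis_iff: "(w, g) \<in> Sbasis n l \<longleftrightarrow> set w \<subseteq> {1..n} \<and> g \<in> Gset n l"
  by (simp add: Sbasis_def)

lemma evec_cancel: "(\<lambda>k. evec j 1 k + evec j (-1) k) = (\<lambda>_. 0)"
  by (auto simp: evec_def)

lemma evec_Tbasis: "j \<in> {1..n} \<Longrightarrow> g \<in> Gset n l \<Longrightarrow> (evec j v, g) \<in> Tbasis n l"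
  by (auto simp: Tbasis_iff evec_def)

lemma zero_Tbasis: "g \<in> Gset n l \<Longrightarrow> ((\<lambda>_. 0), g) \<in> Tbasis n l"
  by (auto simp: Tbasis_iff)

context diag_group
begin

text \<open>The target algebra is an associative twisted algebra: alpha is a 2-cocycle and the
  action of G on Laurent monomials is by characters.\<close>
sublocale T: assoc_twisted_algebra "Tbasis n l" tcomb "tcoef n l z"
proof
  fix a b c assume abc: "a \<in> Tbasis n l" "b \<in> Tbasis n l" "c \<in> Tbasis n l"
  obtain p g q h r k where a: "a = (p, g)" and b: "b = (q, h)" and c: "c = (r, k)"
    by (cases a, cases b, cases c) blast
  have G: "g \<in> G" "h \<in> G" "k \<in> G" using abc a b c by (auto simp: Tbasis_iff)
  show "tcomb a b \<in> Tbasis n l" using abc a b G by (auto simp: tcomb_def Tbasis_iff gmul_G)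
  show "tcomb (tcomb a b) c = tcomb a (tcomb b c)"
    by (simp add: a b c tcomb_def gmul_assoc add.assoc)
  have "tcoef n l z a b * tcoef n l z (tcomb a b) c
      = (alpha n l z g h * alpha n l z (gmul g h) k) * (yact n l z g q * yact n l z g r * yact n l z h r)"
    by (simp add: a b c tcomb_def tcoef_def yact_mul G)
  also have "\<dots> = (alpha n l z h k * alpha n l z g (gmul h k)) * (yact n l z g q * yact n l z g r * yact n l z h r)"
    by (simp add: alpha_cocycle G)
  also have "\<dots> = tcoef n l z b c * tcoef n l z a (tcomb b c)"
    by (simp add: a b c tcomb_def tcoef_def yact_add)
  finally show "tcoef n l z a b * tcoef n l z (tcomb a b) c = tcoef n l z b c * tcoef n l z a (tcomb b c)" .
qed

lemma T_mul_basis: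
  "T.mul (ymono p g) (ymono q h)
     = (\<lambda>c. alpha n l z g h * yact n l z g q * ymono (\<lambda>i. p i + q i) (gmul g h) c)"
  unfolding T.mul_basis by (simp add: tcomb_def tcoef_def)

lemma tone_eq: "tone = ymono (\<lambda>_. 0) gone" by (simp add: tone_def)
lemma tg_eq: "tg g = ymono (\<lambda>_. 0) g" by (simp add: tg_def)

lemma tg_alg: "g \<in> G \<Longrightarrow> tg g \<in> T.alg"
  by (simp add: tg_eq T.alg_basis zero_Tbasis)

lemma tone_alg: "tone \<in> T.alg"
  by (simp add: tone_eq T.alg_basis zero_Tbasis gone_G)

lemma T_mul_one_left: "F \<in> T.alg \<Longrightarrow> T.mul tone F = F"
  unfolding tone_eq
  by (rule T.mul_unit_left) (auto simp: tcomb_def tcoef_def gmul_one alpha_one yact_one)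

lemma T_mul_one_right: "F \<in> T.alg \<Longrightarrow> T.mul F tone = F"
  unfolding tone_eq
  by (rule T.mul_unit_right) (auto simp: tcomb_def tcoef_def gmul_one alpha_one yact_zero)

lemma T_mul_tg: "T.mul (tg g) (tg h) = (\<lambda>c. alpha n l z g h * tg (gmul g h) c)"
  by (simp add: tg_eq T_mul_basis yact_zero)

end

locale theta_setting = diag_group +
  fixes t :: "nat \<Rightarrow> complex"
begin

definition kappa :: "nat \<Rightarrow> complex" where
  "kappa j = z * t j / (z - 1)"

definition ypart :: "nat \<Rightarrow> (nat \<Rightarrow> int) \<times> (nat \<Rightarrow> complex) \<Rightarrow> complex" where
  "ypart j = ymono (evec j 1) gone"

definition gpart :: "nat \<Rightarrow> (nat \<Rightarrow> int) \<times> (nat \<Rightarrow> complex) \<Rightarrow> complex" where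
  "gpart j = ymono (evec (succ_idx n j) (-1)) (gen n z j)"

definition theta_x :: "nat \<Rightarrow> (nat \<Rightarrow> int) \<times> (nat \<Rightarrow> complex) \<Rightarrow> complex" where
  "theta_x j = (\<lambda>y. ypart j y - kappa j * gpart j y)"

lemma ypart_alg: "j \<in> {1..n} \<Longrightarrow> ypart j \<in> T.alg"
  unfolding ypart_def by (intro T.alg_basis evec_Tbasis gone_G)

lemma gpart_alg: "j \<in> {1..n} \<Longrightarrow> gpart j \<in> T.alg"
  unfolding gpart_def by (intro T.alg_basis evec_Tbasis gen_G succ_in)

lemma theta_x_alg: "j \<in> {1..n} \<Longrightarrow> theta_x j \<in> T.alg"
  unfolding theta_x_def by (intro T.alg_diff T.alg_scale ypart_alg gpart_alg)

text \<open>Group elements commute with Theta(x_j) up to the scalar g(x_j), exactly as g commutes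
  with x_j in the source algebra; this rests on alpha_commute_gen.\<close>
lemma tg_theta_x:
  assumes g: "g \<in> G" and j: "j \<in> {1..n}"
  shows "T.mul (tg g) (theta_x j) = (\<lambda>y. g j * T.mul (theta_x j) (tg g) y)"
proof -
  let ?s = "succ_idx n j" and ?gj = "gen n z j"
  have sj: "?s \<in> {1..n}" using succ_in[OF j] .
  have m: "ypart j \<in> T.alg" "gpart j \<in> T.alg" "(\<lambda>y. kappa j * gpart j y) \<in> T.alg" "tg g \<in> T.alg"
    using ypart_alg[OF j] gpart_alg[OF j] T.alg_scale tg_alg[OF g] by auto
  have b1: "T.mul (tg g) (ypart j) = (\<lambda>y. g j * ymono (evec j 1) g y)"
    using yact_single[OF g j, of 1] by (simp add: ypart_def tg_eq T_mul_basis alpha_one gmul_one evec_def)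
  have b2: "T.mul (tg g) (gpart j)
      = (\<lambda>y. (alpha n l z g ?gj * inverse (g ?s)) * ymono (evec ?s (-1)) (gmul g ?gj) y)"
    using yact_single[OF g sj, of "-1"] by (simp add: gpart_def tg_eq T_mul_basis evec_def power_int_minus)
  have b3: "T.mul (ypart j) (tg g) = ymono (evec j 1) g"
    by (simp add: ypart_def tg_eq T_mul_basis alpha_one yact_one gmul_one)
  have b4: "T.mul (gpart j) (tg g) = (\<lambda>y. alpha n l z ?gj g * ymono (evec ?s (-1)) (gmul ?gj g) y)"
    by (simp add: gpart_def tg_eq T_mul_basis yact_zero)
  have "T.mul (tg g) (theta_x j) = (\<lambda>c. T.mul (tg g) (ypart j) c - kappa j * T.mul (tg g) (gpart j) c)"
    unfolding theta_x_def T.mul_diff_right[OF m(1,3,4)] T.mul_scale_right[OF m(2,4)] ..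
  also have "\<dots> = (\<lambda>c. g j * (ymono (evec j 1) g c
                       - kappa j * (alpha n l z ?gj g * ymono (evec ?s (-1)) (gmul ?gj g) c)))"
    unfolding b1 b2 using alpha_commute_gen[OF g j] by (simp add: gmul_comm[of g] algebra_simps)
  also have "\<dots> = (\<lambda>y. g j * T.mul (theta_x j) (tg g) y)"
    unfolding theta_x_def T.mul_diff_left[OF m(1,3,4)] T.mul_scale_left[OF m(2,4)] b3 b4 ..
  finally show ?thesis .
qed

fun theta_word :: "nat list \<Rightarrow> (nat \<Rightarrow> int) \<times> (nat \<Rightarrow> complex) \<Rightarrow> complex" where
  "theta_word [] = tone"
| "theta_word (j # w) = T.mul (theta_x j) (theta_word w)"

lemma theta_word_alg: "set w \<subseteq> {1..n} \<Longrightarrow> theta_word w \<in> T.alg"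
  by (induction w) (auto simp: tone_alg T.mul_closed theta_x_alg)

lemma theta_word_append:
  "set w \<subseteq> {1..n} \<Longrightarrow> set w' \<subseteq> {1..n} \<Longrightarrow> theta_word (w @ w') = T.mul (theta_word w) (theta_word w')"
  by (induction w) (simp_all add: T_mul_one_left theta_word_alg T.mul_assoc theta_x_alg)

lemma tg_theta_word:
  assumes g: "g \<in> G"
  shows "set w \<subseteq> {1..n} \<Longrightarrow> T.mul (tg g) (theta_word w) = (\<lambda>y. xact g w * T.mul (theta_word w) (tg g) y)"
proof (induction w)
  case Nil then show ?case by (simp add: T_mul_one_left T_mul_one_right tg_alg g xact_def)
next
  case (Cons j w)
  have j: "j \<in> {1..n}" and w: "set w \<subseteq> {1..n}" using Cons by auto
  have m: "theta_word w \<in> T.alg" "theta_x j \<in> T.alg" "tg g \<in> T.alg"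
    using theta_word_alg[OF w] theta_x_alg[OF j] tg_alg[OF g] .
  have "T.mul (tg g) (theta_word (j # w)) = T.mul (T.mul (tg g) (theta_x j)) (theta_word w)"
    by (simp add: T.mul_assoc m)
  also have "\<dots> = (\<lambda>c. g j * T.mul (theta_x j) (T.mul (tg g) (theta_word w)) c)"
    unfolding tg_theta_x[OF g j] T.mul_scale_left[OF T.mul_closed[OF m(2,3)] m(1)]
    by (simp add: T.mul_assoc m)
  also have "\<dots> = (\<lambda>c. g j * (xact g w * T.mul (theta_x j) (T.mul (theta_word w) (tg g)) c))"
    unfolding Cons.IH[OF w] T.mul_scale_right[OF T.mul_closed[OF m(1,3)] m(2)] ..
  also have "\<dots> = (\<lambda>y. xact g (j # w) * T.mul (theta_word (j # w)) (tg g) y)"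
    by (simp add: xact_def T.mul_assoc m mult.assoc)
  finally show ?case .
qed

definition theta_basis :: "nat list \<times> (nat \<Rightarrow> complex) \<Rightarrow> (nat \<Rightarrow> int) \<times> (nat \<Rightarrow> complex) \<Rightarrow> complex"
  where "theta_basis b = T.mul (theta_word (fst b)) (tg (snd b))"

lemma theta_basis_alg: "b \<in> Sbasis n l \<Longrightarrow> theta_basis b \<in> T.alg"
  by (cases b) (auto simp: theta_basis_def Sbasis_iff intro!: T.mul_closed theta_word_alg tg_alg)

lemma theta_basis_mul:
  assumes b1: "(w, g) \<in> Sbasis n l" and b2: "(w', h) \<in> Sbasis n l"
  shows "T.mul (theta_basis (w, g)) (theta_basis (w', h))
           = (\<lambda>c. (alpha n l z g h * xact g w') * theta_basis (w @ w', gmul g h) c)"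
proof -
  have w: "set w \<subseteq> {1..n}" "set w' \<subseteq> {1..n}" and G: "g \<in> G" "h \<in> G"
    using b1 b2 by (auto simp: Sbasis_iff)
  have X: "theta_word w \<in> T.alg" "theta_word w' \<in> T.alg" using theta_word_alg w by auto
  have T: "tg g \<in> T.alg" "tg h \<in> T.alg" "tg (gmul g h) \<in> T.alg" using tg_alg G gmul_G by auto
  have "T.mul (theta_basis (w, g)) (theta_basis (w', h))
      = T.mul (theta_word w) (T.mul (T.mul (tg g) (theta_word w')) (tg h))"
    by (simp add: theta_basis_def T.mul_assoc X T T.mul_closed)
  also have "\<dots> = (\<lambda>c. xact g w' * T.mul (theta_word w) (T.mul (theta_word w') (T.mul (tg g) (tg h))) c)"
    unfolding tg_theta_word[OF G(1) w(2)] T.mul_scale_left[OF T.mul_closed[OF X(2) T(1)] T(2)]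
    by (subst T.mul_scale_right) (auto simp: T.mul_assoc X T T.mul_closed)
  also have "\<dots> = (\<lambda>c. (alpha n l z g h * xact g w') * theta_basis (w @ w', gmul g h) c)"
    unfolding T_mul_tg T.mul_scale_right[OF T(3) X(2)] T.mul_scale_right[OF T.mul_closed[OF X(2) T(3)] X(1)]
      theta_basis_def fst_conv snd_conv theta_word_append[OF w] T.mul_assoc[OF X T(3)]
    by (simp add: mult_ac)
  finally show ?thesis .
qed

end

context theta_setting
begin

lemma theta_x_product:
  assumes i: "i \<in> {1..n}" and j: "j \<in> {1..n}"
  shows "T.mul (theta_x i) (theta_x j)
    = (\<lambda>c. T.mul (ypart i) (ypart j) c - kappa j * T.mul (ypart i) (gpart j) c
          - kappa i * T.mul (gpart i) (ypart j) c + kappa i * kappa j * T.mul (gpart i) (gpart j) c)"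
proof -
  have m: "ypart i \<in> T.alg" "gpart i \<in> T.alg" "ypart j \<in> T.alg" "gpart j \<in> T.alg"
    "(\<lambda>y. kappa i * gpart i y) \<in> T.alg" "(\<lambda>y. kappa j * gpart j y) \<in> T.alg"
    using ypart_alg gpart_alg T.alg_scale i j by auto
  have t: "theta_x j \<in> T.alg" using theta_x_alg j by auto
  have "T.mul (theta_x i) (theta_x j)
      = (\<lambda>c. T.mul (ypart i) (theta_x j) c - kappa i * T.mul (gpart i) (theta_x j) c)"
    unfolding theta_x_def[of i] T.mul_diff_left[OF m(1) m(5) t] T.mul_scale_left[OF m(2) t] ..
  also have "\<dots> = (\<lambda>c. (T.mul (ypart i) (ypart j) c - kappa j * T.mul (ypart i) (gpart j) c)
                    - kappa i * (T.mul (gpart i) (ypart j) c - kappa j * T.mul (gpart i) (gpart j) c))"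
    unfolding theta_x_def[of j] T.mul_diff_right[OF m(3) m(6) m(1)] T.mul_diff_right[OF m(3) m(6) m(2)]
      T.mul_scale_right[OF m(4) m(1)] T.mul_scale_right[OF m(4) m(2)] ..
  finally show ?thesis by (simp add: algebra_simps)
qed

lemma ypart_ypart: "T.mul (ypart i) (ypart j) = ymono (\<lambda>k. evec i 1 k + evec j 1 k) gone"
  unfolding ypart_def T_mul_basis by (simp add: alpha_one yact_one gmul_one)

lemma ypart_gpart:
  "T.mul (ypart i) (gpart j) = ymono (\<lambda>k. evec i 1 k + evec (succ_idx n j) (-1) k) (gen n z j)"
  unfolding ypart_def gpart_def T_mul_basis by (simp add: alpha_one yact_one gmul_one)

lemma gpart_ypart: "i \<in> {1..n} \<Longrightarrow> j \<in> {1..n} \<Longrightarrow>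
  T.mul (gpart i) (ypart j) = (\<lambda>c. gen n z i j * ymono (\<lambda>k. evec (succ_idx n i) (-1) k + evec j 1 k) (gen n z i) c)"
  unfolding ypart_def gpart_def T_mul_basis using yact_single[OF gen_G, of i j 1]
  by (simp add: alpha_one gmul_one evec_def)

lemma gpart_gpart: "i \<in> {1..n} \<Longrightarrow> j \<in> {1..n} \<Longrightarrow>
  T.mul (gpart i) (gpart j) = (\<lambda>c. alpha n l z (gen n z i) (gen n z j) * inverse (gen n z i (succ_idx n j))
     * ymono (\<lambda>k. evec (succ_idx n i) (-1) k + evec (succ_idx n j) (-1) k) (gmul (gen n z i) (gen n z j)) c)"
  unfolding gpart_def T_mul_basis using yact_single[OF gen_G succ_in, of i j "-1"]
  by (simp add: evec_def power_int_minus)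

text \<open>The scalar in gpart_gpart is symmetric in i and j, so those terms cancel in commutators.\<close>
lemma gpart_gpart_coef_sym:
  assumes i: "i \<in> {1..n}" and j: "j \<in> {1..n}"
  shows "alpha n l z (gen n z i) (gen n z j) * inverse (gen n z i (succ_idx n j))
       = alpha n l z (gen n z j) (gen n z i) * inverse (gen n z j (succ_idx n i))"
proof -
  have "gen n z i j = inverse (gen n z j (succ_idx n i))"
    using gen_cross[OF i j] by (metis inverse_unique mult.commute)
  then show ?thesis using alpha_commute_gen[OF gen_G[OF i] j] by simp
qed

text \<open>The commutator [Theta(x_i), Theta(x_j)] is a combination of two monomials whose
  scalars vanish unless g_i or g_j moves x_j resp. x_i.\<close>
lemma theta_x_commutator:
  assumes i: "i \<in> {1..n}" and j: "j \<in> {1..n}"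
  shows "T.mul (theta_x i) (theta_x j) = (\<lambda>y. T.mul (theta_x j) (theta_x i) y
     - kappa j * (1 - gen n z j i) * ymono (\<lambda>k. evec i 1 k + evec (succ_idx n j) (-1) k) (gen n z j) y
     - kappa i * (gen n z i j - 1) * ymono (\<lambda>k. evec j 1 k + evec (succ_idx n i) (-1) k) (gen n z i) y)"
proof -
  have comm: "(\<lambda>k. p k + q k) = (\<lambda>k. q k + p k)" for p q :: "nat \<Rightarrow> int" by (auto simp: add.commute)
  show ?thesis
    unfolding theta_x_product[OF i j] theta_x_product[OF j i] ypart_ypart ypart_gpart
      gpart_ypart[OF i j] gpart_ypart[OF j i] gpart_gpart[OF i j] gpart_gpart[OF j i]
      comm[of "evec i 1" "evec j 1"] comm[of "evec (succ_idx n i) (-1)" "evec j 1"]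
      comm[of "evec (succ_idx n j) (-1)" "evec i 1"]
      comm[of "evec (succ_idx n i) (-1)" "evec (succ_idx n j) (-1)"]
      gpart_gpart_coef_sym[OF i j] gmul_comm[of "gen n z i"]
    by (rule ext) (simp add: algebra_simps)
qed

end

text \<open>Theta(x_j) = y_j + (terms of lower total degree), so Theta of a word w of length m is
  y^(exponent vector of w) plus terms of degree < m, times the group element.\<close>

context theta_setting
begin

definition deg :: "(nat \<Rightarrow> int) \<Rightarrow> int" where
  "deg p = (\<Sum>j\<in>{1..n}. p j)"

definition word_exp :: "nat list \<Rightarrow> nat \<Rightarrow> int" where
  "word_exp w = (\<lambda>j. int (count (mset w) j))"

lemma deg_diff: "deg (\<lambda>i. p i - q i) = deg p - deg q"
  by (simp add: deg_def sum_subtractf)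

lemma deg_evec: "j \<in> {1..n} \<Longrightarrow> deg (evec j v) = v"
  by (simp add: deg_def evec_def)

lemma word_exp_cons: "word_exp (j # w) = (\<lambda>i. evec j 1 i + word_exp w i)"
  by (auto simp: word_exp_def evec_def)

lemma deg_word_exp: "set w \<subseteq> {1..n} \<Longrightarrow> deg (word_exp w) = int (length w)"
proof (induction w)
  case Nil then show ?case by (simp add: deg_def word_exp_def)
next
  case (Cons j w)
  then show ?case using deg_evec[of j 1] by (simp add: word_exp_cons deg_def sum.distrib)
qed

lemma word_exp_inj: "sorted w \<Longrightarrow> sorted w' \<Longrightarrow> word_exp w = word_exp w' \<Longrightarrow> w = w'"
proof -
  assume sw: "sorted w" "sorted w'" and c: "word_exp w = word_exp w'"
  have "mset w = mset w'"
    by (rule multiset_eqI) (use c in \<open>auto simp: word_exp_def fun_eq_iff\<close>)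
  then have "sort w' = w" by (rule properties_for_sort[OF _ sw(1)])
  then show "w = w'" using sorted_sort_id[OF sw(2)] by simp
qed

lemma T_mul_monomial_left:
  assumes F: "finite (supp F)"
  shows "T.mul (ymono q gone) F (p, h) = F (\<lambda>i. p i - q i, h)"
proof -
  let ?b0 = "((\<lambda>i. p i - q i), h)"
  have "T.mul (ymono q gone) F (p, h)
      = (\<Sum>b\<in>supp F. \<Sum>a\<in>{(q, gone)}. of_bool (tcomb a b = (p, h)) * (ymono q gone a * F b * tcoef n l z a b))"
    by (subst sum.swap, rule tw_sum) (use F in \<open>auto simp: supp_basis\<close>)
  also have "\<dots> = (\<Sum>b\<in>supp F. if b = ?b0 then F b else 0)"
  proof (rule sum.cong[OF refl])
    fix b assume "b \<in> supp F"
    obtain p' h' where b: "b = (p', h')" by fastforce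
    have "(\<lambda>i. q i + p' i) = p \<longleftrightarrow> p' = (\<lambda>i. p i - q i)"
      by (simp add: fun_eq_iff eq_diff_eq add.commute)
    then show "(\<Sum>a\<in>{(q, gone)}. of_bool (tcomb a b = (p, h)) * (ymono q gone a * F b * tcoef n l z a b))
               = (if b = ?b0 then F b else 0)"
      by (auto simp: b tcomb_def tcoef_def basis_el_def gmul_one alpha_one yact_one)
  qed
  also have "\<dots> = F ?b0" using F by (simp add: supp_def)
  finally show ?thesis .
qed

lemma T_mul_nonzero_left:
  assumes "T.mul (ymono q k) F (p, h) \<noteq> 0"
  shows "\<exists>h'. F (\<lambda>i. p i - q i, h') \<noteq> 0"
proof -
  obtain a b where ab: "ymono q k a \<noteq> 0" "F b \<noteq> 0" "tcomb a b = (p, h)"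
    using tw_nonzero[of tcomb "tcoef n l z" "ymono q k" F "(p, h)"] assms by blast
  obtain p' h' where b: "b = (p', h')" by fastforce
  have "a = (q, k)" using ab(1) by (simp add: basis_el_def split: if_splits)
  then have "p' = (\<lambda>i. p i - q i)" using ab(3) b by (auto simp: tcomb_def)
  then show ?thesis using ab(2) b by blast
qed

lemma T_mul_nonzero_right:
  assumes "T.mul F (tg k) (p, h) \<noteq> 0"
  shows "\<exists>h'. F (p, h') \<noteq> 0"
proof -
  obtain a b where ab: "F a \<noteq> 0" "tg k b \<noteq> 0" "tcomb a b = (p, h)"
    using tw_nonzero[of tcomb "tcoef n l z" F "tg k" "(p, h)"] assms by blast
  obtain p' h' where a: "a = (p', h')" by fastforce
  have "b = ((\<lambda>_. 0), k)" using ab(2) by (simp add: tg_eq basis_el_def split: if_splits)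
  then have "p = p'" using ab(3) a by (auto simp: tcomb_def)
  then show ?thesis using ab(1) a by blast
qed

lemma theta_word_cons_eval:
  assumes j: "j \<in> {1..n}" and w: "set w \<subseteq> {1..n}"
  shows "theta_word (j # w) (p, h)
           = theta_word w (\<lambda>i. p i - evec j 1 i, h) - kappa j * T.mul (gpart j) (theta_word w) (p, h)"
proof -
  have X: "theta_word w \<in> T.alg" using theta_word_alg[OF w] .
  have "theta_word (j # w) = (\<lambda>c. T.mul (ypart j) (theta_word w) c - kappa j * T.mul (gpart j) (theta_word w) c)"
    unfolding theta_word.simps theta_x_def
      T.mul_diff_left[OF ypart_alg[OF j] T.alg_scale[OF gpart_alg[OF j]] X] T.mul_scale_left[OF gpart_alg[OF j] X] ..
  then show ?thesis by (simp add: ypart_def T_mul_monomial_left[OF T.alg_fin[OF X]])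
qed

lemma theta_word_degree:
  "set w \<subseteq> {1..n} \<Longrightarrow> theta_word w (p, h) \<noteq> 0 \<Longrightarrow> deg p \<le> int (length w)"
proof (induction w arbitrary: p h)
  case Nil then show ?case by (simp add: tone_eq basis_el_def deg_def split: if_splits)
next
  case (Cons j w)
  have j: "j \<in> {1..n}" and w: "set w \<subseteq> {1..n}" using Cons.prems by auto
  consider "theta_word w (\<lambda>i. p i - evec j 1 i, h) \<noteq> 0" | "T.mul (gpart j) (theta_word w) (p, h) \<noteq> 0"
    using Cons.prems(2) theta_word_cons_eval[OF j w] by force
  then show ?case
  proof cases
    case 1
    then show ?thesis using Cons.IH[OF w] deg_evec[OF j] by (fastforce simp: deg_diff)
  next
    case 2
    then obtain h' where "theta_word w (\<lambda>i. p i - evec (succ_idx n j) (-1) i, h') \<noteq> 0"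
      unfolding gpart_def using T_mul_nonzero_left by blast
    then show ?thesis using Cons.IH[OF w] deg_evec[OF succ_in[OF j]] by (fastforce simp: deg_diff)
  qed
qed

lemma theta_word_top:
  "set w \<subseteq> {1..n} \<Longrightarrow> deg p = int (length w)
     \<Longrightarrow> theta_word w (p, h) = (if p = word_exp w \<and> h = gone then 1 else 0)"
proof (induction w arbitrary: p h)
  case Nil then show ?case by (auto simp: tone_eq basis_el_def word_exp_def)
next
  case (Cons j w)
  have j: "j \<in> {1..n}" and w: "set w \<subseteq> {1..n}" using Cons.prems by auto
  have "T.mul (gpart j) (theta_word w) (p, h) = 0"
  proof (rule ccontr)
    assume "T.mul (gpart j) (theta_word w) (p, h) \<noteq> 0"
    then obtain h' where "theta_word w (\<lambda>i. p i - evec (succ_idx n j) (-1) i, h') \<noteq> 0"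
      unfolding gpart_def using T_mul_nonzero_left by blast
    then show False
      using theta_word_degree[OF w] deg_evec[OF succ_in[OF j]] Cons.prems(2) by (fastforce simp: deg_diff)
  qed
  then have "theta_word (j # w) (p, h) = theta_word w (\<lambda>i. p i - evec j 1 i, h)"
    using theta_word_cons_eval[OF j w] by simp
  also have "\<dots> = (if (\<lambda>i. p i - evec j 1 i) = word_exp w \<and> h = gone then 1 else 0)"
    using Cons.IH[OF w] Cons.prems(2) deg_evec[OF j] by (simp add: deg_diff)
  also have "(\<lambda>i. p i - evec j 1 i) = word_exp w \<longleftrightarrow> p = word_exp (j # w)"
    by (auto simp: word_exp_cons fun_eq_iff algebra_simps)
  finally show ?case .
qed

lemma theta_basis_degree:
  assumes "(w, g) \<in> Sbasis n l" "theta_basis (w, g) (p, h) \<noteq> 0"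
  shows "deg p \<le> int (length w)"
proof -
  obtain h' where "theta_word w (p, h') \<noteq> 0"
    using T_mul_nonzero_right assms(2) by (fastforce simp: theta_basis_def)
  then show ?thesis using theta_word_degree assms(1) by (simp add: Sbasis_iff)
qed

lemma theta_basis_top:
  assumes b: "(w, g) \<in> Sbasis n l" and dp: "deg p = int (length w)"
  shows "theta_basis (w, g) (p, h) = (if p = word_exp w \<and> h = g then 1 else 0)"
proof -
  have w: "set w \<subseteq> {1..n}" and G: "g \<in> G" using b by (auto simp: Sbasis_iff)
  have Xf: "finite (supp (theta_word w))" using T.alg_fin[OF theta_word_alg[OF w]] .
  let ?a0 = "(word_exp w, gone)"
  have "theta_basis (w, g) (p, h)
      = (\<Sum>a\<in>supp (theta_word w). \<Sum>b\<in>{((\<lambda>_. 0), g)}.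
           of_bool (tcomb a b = (p, h)) * (theta_word w a * tg g b * tcoef n l z a b))"
    unfolding theta_basis_def fst_conv snd_conv by (rule tw_sum) (use Xf in \<open>auto simp: tg_eq supp_basis\<close>)
  also have "\<dots> = (\<Sum>a\<in>supp (theta_word w). if a = ?a0 then of_bool (p = word_exp w \<and> h = g) else 0)"
  proof (rule sum.cong[OF refl])
    fix a assume a: "a \<in> supp (theta_word w)"
    obtain p' h' where a': "a = (p', h')" by fastforce
    show "(\<Sum>b\<in>{((\<lambda>_. 0), g)}. of_bool (tcomb a b = (p, h)) * (theta_word w a * tg g b * tcoef n l z a b))
        = (if a = ?a0 then of_bool (p = word_exp w \<and> h = g) else 0)"
    proof (cases "p' = p")
      case True
      then have "theta_word w a = (if p' = word_exp w \<and> h' = gone then 1 else 0)"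
        using theta_word_top[OF w dp] a' by blast
      then show ?thesis using a' a
        by (auto simp: supp_def tg_eq basis_el_def tcomb_def tcoef_def alpha_one yact_zero gmul_one)
    qed (use a' in \<open>auto simp: tcomb_def\<close>)
  qed
  also have "\<dots> = (if p = word_exp w \<and> h = g then 1 else 0)"
    using Xf theta_word_top[OF w deg_word_exp[OF w]] by (simp add: supp_def)
  finally show ?thesis .
qed

end

text \<open>The product of TV #_alpha G in terms of basis data:
  x_w g \<cdot> x_w' h = alpha(g,h) g(x_w') x_(w w') gh.\<close>
definition scomb :: "nat list \<times> (nat \<Rightarrow> complex) \<Rightarrow> nat list \<times> (nat \<Rightarrow> complex) \<Rightarrow> nat list \<times> (nat \<Rightarrow> complex)"
  where "scomb = (\<lambda>(w, g) (w', h). (w @ w', gmul g h))"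

definition scoef :: "nat \<Rightarrow> nat \<Rightarrow> complex \<Rightarrow> nat list \<times> (nat \<Rightarrow> complex) \<Rightarrow> nat list \<times> (nat \<Rightarrow> complex) \<Rightarrow> complex"
  where "scoef n l z = (\<lambda>(w, g) (w', h). alpha n l z g h * xact g w')"

lemma smul_eq: "smul n l z = tw_mult scomb (scoef n l z)"
  by (simp add: smul_def scomb_def scoef_def)

abbreviation xmono :: "nat list \<Rightarrow> (nat \<Rightarrow> complex) \<Rightarrow> nat list \<times> (nat \<Rightarrow> complex) \<Rightarrow> complex"
  where "xmono w g \<equiv> basis_el (w, g)"

lemma xact_one: "xact gone w = 1"
  by (induction w) (auto simp: xact_def gone_def)

context diag_group
begin

sublocale S: twisted_algebra "Sbasis n l" scomb "scoef n l z"
  by unfold_locales (force simp: scomb_def Sbasis_def gmul_G)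

lemma S_mul_basis:
  "S.mul (xmono w g) (xmono w' h) = (\<lambda>c. alpha n l z g h * xact g w' * xmono (w @ w') (gmul g h) c)"
  unfolding S.mul_basis by (simp add: scomb_def scoef_def)

lemma xmono_alg: "set w \<subseteq> {1..n} \<Longrightarrow> g \<in> G \<Longrightarrow> xmono w g \<in> S.alg"
  by (rule S.alg_basis) (simp add: Sbasis_def)

end

context theta_setting
begin

definition Theta :: "(nat list \<times> (nat \<Rightarrow> complex) \<Rightarrow> complex) \<Rightarrow> (nat \<Rightarrow> int) \<times> (nat \<Rightarrow> complex) \<Rightarrow> complex"
  where "Theta = lin_ext theta_basis"

lemma Theta_alg: "a \<in> S.alg \<Longrightarrow> Theta a \<in> T.alg"
  unfolding Theta_def lin_ext_def
  by (intro T.alg_sum T.alg_scale theta_basis_alg) (auto simp: S.alg_iff)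

lemma Theta_lin:
  "a \<in> S.alg \<Longrightarrow> b \<in> S.alg \<Longrightarrow> Theta (\<lambda>x. c1 * a x + c2 * b x) = (\<lambda>y. c1 * Theta a y + c2 * Theta b y)"
  unfolding Theta_def by (rule lin_ext_lin) (auto simp: S.alg_iff)

lemma Theta_diff: "a \<in> S.alg \<Longrightarrow> b \<in> S.alg \<Longrightarrow> Theta (\<lambda>x. a x - b x) = (\<lambda>y. Theta a y - Theta b y)"
  using Theta_lin[of a b 1 "-1"] by simp

lemma Theta_scale: "a \<in> S.alg \<Longrightarrow> Theta (\<lambda>x. c * a x) = (\<lambda>y. c * Theta a y)"
  using Theta_lin[of a a c 0] by simp

lemma Theta_xmono: "Theta (xmono w g) = theta_basis (w, g)"
  by (simp add: Theta_def lin_ext_basis)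

lemma Theta_mul: "a \<in> S.alg \<Longrightarrow> b \<in> S.alg \<Longrightarrow> Theta (S.mul a b) = T.mul (Theta a) (Theta b)"
  unfolding Theta_def
proof (rule lin_ext_mult)
  assume a: "a \<in> S.alg" and b: "b \<in> S.alg"
  then show "finite (supp a)" "finite (supp b)" by (simp_all add: S.alg_iff)
  show "finite (supp (theta_basis x))" if "x \<in> supp a \<union> supp b" for x
  proof -
    have "x \<in> Sbasis n l" using that a b by (auto simp: S.alg_iff)
    then show ?thesis by (rule T.alg_fin[OF theta_basis_alg])
  qed
  fix x y assume "x \<in> supp a" "y \<in> supp b"
  then have "x \<in> Sbasis n l" "y \<in> Sbasis n l" using a b by (auto simp: S.alg_iff)
  then show "T.mul (theta_basis x) (theta_basis y) = (\<lambda>v. scoef n l z x y * theta_basis (scomb x y) v)"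
    by (cases x, cases y) (simp add: theta_basis_mul scoef_def scomb_def)
qed

subsection \<open>The defining relations of H lie in the kernel of Theta\<close>

abbreviation Hid where "Hid \<equiv> Hideal n l z t"

lemma Hideal_eq: "Hid = ideal_gen S.mul S.alg (Hrels n l z t)"
  by (simp add: Hideal_def smul_eq Salg_def)

definition rel_adj :: "nat \<Rightarrow> nat list \<times> (nat \<Rightarrow> complex) \<Rightarrow> complex" where
  "rel_adj i = (\<lambda>x. xmono [i, succ_idx n i] gone x - xmono [succ_idx n i, i] gone x
                      - t i * xmono [] (gen n z i) x)"

definition rel_far :: "nat \<Rightarrow> nat \<Rightarrow> nat list \<times> (nat \<Rightarrow> complex) \<Rightarrow> complex" where
  "rel_far i j = (\<lambda>x. xmono [i, j] gone x - xmono [j, i] gone x)"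

lemma smul_sx: "smul n l z (sx i) (sx j) = xmono [i, j] gone"
  by (simp add: sx_def smul_eq S_mul_basis alpha_one xact_one gmul_one)

lemma rel_adj_alg: "i \<in> {1..n} \<Longrightarrow> rel_adj i \<in> S.alg"
  unfolding rel_adj_def by (intro S.alg_diff S.alg_scale xmono_alg gone_G gen_G) (use succ_in[of i] in auto)

lemma rel_far_alg: "i \<in> {1..n} \<Longrightarrow> j \<in> {1..n} \<Longrightarrow> rel_far i j \<in> S.alg"
  unfolding rel_far_def by (intro S.alg_diff xmono_alg gone_G) auto

lemma Hrels_cases: "x \<in> Hrels n l z t \<Longrightarrow>
   (\<exists>i\<in>{1..n}. x = rel_adj i) \<or> (\<exists>i\<in>{1..n}. \<exists>j\<in>{1..n}. idx_dist i j \<notin> {1, n - 1} \<and> x = rel_far i j)"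
  unfolding Hrels_def rel_adj_def rel_far_def fdiff_def smul_sx sg_def by blast

lemma rel_adj_in: "i \<in> {1..n} \<Longrightarrow> rel_adj i \<in> Hid"
  unfolding Hideal_eq by (rule ideal_gen_gens) (auto simp: Hrels_def rel_adj_def fdiff_def smul_sx sg_def)

lemma rel_far_in: "i \<in> {1..n} \<Longrightarrow> j \<in> {1..n} \<Longrightarrow> idx_dist i j \<notin> {1, n - 1} \<Longrightarrow> rel_far i j \<in> Hid"
  unfolding Hideal_eq by (rule ideal_gen_gens) (auto simp: Hrels_def rel_far_def fdiff_def smul_sx)

lemma Theta_pair: "i \<in> {1..n} \<Longrightarrow> j \<in> {1..n} \<Longrightarrow> Theta (xmono [i, j] gone) = T.mul (theta_x i) (theta_x j)"
  by (simp add: Theta_xmono theta_basis_def tg_def flip: tone_def)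
    (simp add: T_mul_one_right theta_x_alg T.mul_closed tone_alg)

lemma Theta_group: "g \<in> G \<Longrightarrow> Theta (xmono [] g) = tg g"
  by (simp add: Theta_xmono theta_basis_def T_mul_one_left tg_alg)

text \<open>The relation for adjacent indices: the coefficient of kappa_i was chosen so that
  kappa_i (1 - zeta^(-1)) = t_i.\<close>
lemma Theta_rel_adj: assumes i: "i \<in> {1..n}" shows "Theta (rel_adj i) = (\<lambda>_. 0)"
proof -
  let ?j = "succ_idx n i"
  have j: "?j \<in> {1..n}" using succ_in[OF i] .
  have m: "xmono [i, ?j] gone \<in> S.alg" "xmono [?j, i] gone \<in> S.alg" "xmono [] (gen n z i) \<in> S.alg"
    using i j by (auto intro!: xmono_alg gone_G gen_G)
  have g1: "gen n z ?j i = 1" using succ_ne[OF i] succ_succ_ne[OF i] gen_val[OF j i] by auto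
  have g2: "gen n z i ?j = inverse z" using succ_ne[OF i] gen_val[OF i j] by auto
  have coef: "kappa i - t i - inverse z * kappa i = 0"
    using z_ne1 z_nz by (simp add: kappa_def field_simps)
  have "Theta (rel_adj i)
      = (\<lambda>y. T.mul (theta_x i) (theta_x ?j) y - T.mul (theta_x ?j) (theta_x i) y - t i * tg (gen n z i) y)"
    unfolding rel_adj_def
    by (simp add: Theta_diff Theta_scale m S.alg_diff S.alg_scale Theta_pair[OF i j] Theta_pair[OF j i]
        Theta_group gen_G[OF i])
  also have "\<dots> = (\<lambda>y. (kappa i - t i - inverse z * kappa i) * tg (gen n z i) y)"
    unfolding theta_x_commutator[OF i j] g1 g2 evec_cancel tg_eq by (simp add: algebra_simps)
  finally show ?thesis unfolding coef by simp
qed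

lemma Theta_rel_far:
  assumes i: "i \<in> {1..n}" and j: "j \<in> {1..n}" and d: "idx_dist i j \<notin> {1, n - 1}"
  shows "Theta (rel_far i j) = (\<lambda>_. 0)"
proof (cases "i = j")
  case True then show ?thesis by (simp add: rel_far_def Theta_def lin_ext_zero)
next
  case False
  have "j \<noteq> succ_idx n i" "i \<noteq> succ_idx n j"
    using i j d n3 unfolding idx_dist_def succ_idx_def by (auto split: if_splits)
  then have g: "gen n z j i = 1" "gen n z i j = 1" using False gen_val[OF j i] gen_val[OF i j] by auto
  have m: "xmono [i, j] gone \<in> S.alg" "xmono [j, i] gone \<in> S.alg" using i j by (auto intro!: xmono_alg gone_G)
  show ?thesis
    unfolding rel_far_def Theta_diff[OF m] Theta_pair[OF i j] Theta_pair[OF j i] theta_x_commutator[OF i j] g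
    by simp
qed

text \<open>The kernel of Theta is a two-sided ideal containing the relations, hence contains H's ideal.\<close>
lemma Hideal_kernel: "a \<in> Hid \<Longrightarrow> a \<in> S.alg \<and> Theta a = (\<lambda>_. 0)"
proof -
  let ?K = "{a \<in> S.alg. Theta a = (\<lambda>_. 0)}"
  have "is_ideal_over S.mul S.alg (Hrels n l z t) ?K"
    unfolding is_ideal_over_def
  proof (intro conjI ballI allI)
    show "Hrels n l z t \<subseteq> ?K"
      using Hrels_cases Theta_rel_adj Theta_rel_far rel_adj_alg rel_far_alg by blast
    show "?K \<subseteq> S.alg" by blast
    show "(\<lambda>_. 0) \<in> ?K" using S.alg_zero by (simp add: Theta_def lin_ext_zero)
  next
    fix a b assume "a \<in> ?K" "b \<in> ?K"
    then show "(\<lambda>x. a x + b x) \<in> ?K" using S.alg_lin[of a b 1 1] Theta_lin[of a b 1 1] by simp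
  next
    fix c a assume "a \<in> ?K"
    then show "(\<lambda>x. c * a x) \<in> ?K" using S.alg_scale Theta_scale by simp
  next
    fix a j assume a: "a \<in> S.alg" and j: "j \<in> ?K"
    then show "S.mul a j \<in> ?K" using S.mul_closed[of a j] Theta_mul[of a j] T.mul_zero_right by simp
  next
    fix a j assume a: "a \<in> S.alg" and j: "j \<in> ?K"
    then show "S.mul j a \<in> ?K" using S.mul_closed[of j a] Theta_mul[of j a] T.mul_zero_left by simp
  qed
  then show "a \<in> Hid \<Longrightarrow> a \<in> S.alg \<and> Theta a = (\<lambda>_. 0)"
    unfolding Hideal_eq using ideal_gen_least by blast
qed

end

subsection \<open>Sorted words span the quotient\<close>

text \<open>Modulo the ideal, every element is congruent to a combination of basis elements
  x_(w_1) \<cdots> x_(w_m) \<otimes> g with w sorted: an adjacent inversion b < a in a word can be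
  swapped at the cost of a term with a shorter word.\<close>

context theta_setting
begin

definition Sorted :: "(nat list \<times> (nat \<Rightarrow> complex) \<Rightarrow> complex) set" where
  "Sorted = {s \<in> S.alg. \<forall>w g. s (w, g) \<noteq> 0 \<longrightarrow> sorted w}"

definition reducible :: "(nat list \<times> (nat \<Rightarrow> complex) \<Rightarrow> complex) \<Rightarrow> bool" where
  "reducible a \<longleftrightarrow> (\<exists>s\<in>Sorted. (\<lambda>x. a x - s x) \<in> Hid)"

lemma Sorted_lin: assumes "s1 \<in> Sorted" "s2 \<in> Sorted" shows "(\<lambda>x. a * s1 x + b * s2 x) \<in> Sorted"
proof -
  have "sorted w" if "a * s1 (w, g) + b * s2 (w, g) \<noteq> 0" for w g
  proof -
    have "s1 (w, g) \<noteq> 0 \<or> s2 (w, g) \<noteq> 0" using that by auto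
    then show ?thesis using assms unfolding Sorted_def by blast
  qed
  then show ?thesis using assms S.alg_lin[of s1 s2 a b] unfolding Sorted_def by blast
qed

lemma reducible_zero: "reducible (\<lambda>_. 0)"
  unfolding reducible_def Sorted_def
  by (rule bexI[of _ "\<lambda>_. 0"]) (auto simp: S.alg_zero Hideal_eq ideal_gen_zero)

lemma reducible_sorted:
  assumes "sorted w" "set w \<subseteq> {1..n}" "g \<in> G" shows "reducible (xmono w g)"
proof -
  have "xmono w g \<in> Sorted"
    unfolding Sorted_def using assms xmono_alg by (auto simp: basis_el_def split: if_splits)
  then show ?thesis
    unfolding reducible_def by (rule bexI[rotated]) (simp add: Hideal_eq ideal_gen_zero)
qed

lemma reducible_lin:
  assumes "reducible a" "reducible b" shows "reducible (\<lambda>x. c1 * a x + c2 * b x)"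
proof -
  obtain s1 s2 where s: "s1 \<in> Sorted" "s2 \<in> Sorted"
    and h: "(\<lambda>x. a x - s1 x) \<in> Hid" "(\<lambda>x. b x - s2 x) \<in> Hid"
    using assms unfolding reducible_def by blast
  have "(\<lambda>x. (\<lambda>x. c1 * (\<lambda>x. a x - s1 x) x) x + (\<lambda>x. c2 * (\<lambda>x. b x - s2 x) x) x) \<in> Hid"
    using h unfolding Hideal_eq by (intro ideal_gen_add ideal_gen_scale)
  then have "(\<lambda>x. (c1 * a x + c2 * b x) - (c1 * s1 x + c2 * s2 x)) \<in> Hid"
    by (simp add: algebra_simps)
  then show ?thesis unfolding reducible_def by (rule bexI[OF _ Sorted_lin[OF s, of c1 c2]])
qed

lemma reducible_mod:
  assumes "(\<lambda>x. a x - b x) \<in> Hid" "reducible b" shows "reducible a"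
proof -
  obtain s where s: "s \<in> Sorted" "(\<lambda>x. b x - s x) \<in> Hid" using assms(2) unfolding reducible_def by blast
  have "(\<lambda>x. (\<lambda>x. a x - b x) x + (\<lambda>x. b x - s x) x) \<in> Hid"
    using assms(1) s(2) unfolding Hideal_eq by (rule ideal_gen_add)
  then show ?thesis unfolding reducible_def using s(1) by (intro bexI[of _ s]) simp_all
qed

text \<open>A weight on words that strictly decreases when an adjacent inversion is swapped.\<close>
fun inversion_weight :: "nat list \<Rightarrow> nat" where
  "inversion_weight [] = 0"
| "inversion_weight (x # xs) = x * Suc (length xs) + inversion_weight xs"

lemma inversion_weight_swap:
  assumes "b < a" shows "inversion_weight (u @ [b, a] @ v) < inversion_weight (u @ [a, b] @ v)"
proof (induction u)
  case Nil
  have "b * Suc (Suc (length v)) + a * Suc (length v) < a * Suc (Suc (length v)) + b * Suc (length v)"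
    using assms by simp
  then show ?case by simp
qed simp

lemma unsorted_inversion: "\<not> sorted w \<Longrightarrow> \<exists>u a b v. w = u @ [a, b] @ v \<and> b < (a::nat)"
proof (induction w)
  case (Cons x xs)
  show ?case
  proof (cases xs)
    case (Cons y ys)
    show ?thesis
    proof (cases "y < x")
      case True then show ?thesis using Cons by (intro exI[of _ "[]"]) auto
    next
      case False
      have "sorted (x # y # ys) = (x \<le> y \<and> sorted (y # ys))" by (rule sorted2)
      then have "\<not> sorted xs" using Cons False \<open>\<not> sorted (x # xs)\<close> by simp
      then obtain u a b v where "xs = u @ [a, b] @ v" "b < a" using Cons.IH by blast
      then show ?thesis by (intro exI[of _ "x # u"]) auto
    qed
  qed (use Cons in simp)
qed simp

lemma relation_sandwich:
  assumes u: "set u \<subseteq> {1..n}" and p: "set p \<subseteq> {1..n}" and q: "set q \<subseteq> {1..n}" and v: "set v \<subseteq> {1..n}"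
    and g: "g \<in> G" and k: "k \<in> G"
  shows "S.mul (xmono u gone) (S.mul (\<lambda>x. xmono p gone x - xmono q gone x - \<tau> * xmono [] k x) (xmono v g))
       = (\<lambda>x. xmono (u @ p @ v) g x - xmono (u @ q @ v) g x
              - (\<tau> * alpha n l z k g * xact k v) * xmono (u @ v) (gmul k g) x)"
proof -
  have m: "xmono p gone \<in> S.alg" "xmono q gone \<in> S.alg" "xmono [] k \<in> S.alg" "xmono v g \<in> S.alg"
    "xmono u gone \<in> S.alg" "xmono (p @ v) g \<in> S.alg" "xmono (q @ v) g \<in> S.alg" "xmono v (gmul k g) \<in> S.alg"
    using u p q v g k by (simp_all add: xmono_alg gone_G gmul_G)
  have inner: "S.mul (\<lambda>x. xmono p gone x - xmono q gone x - \<tau> * xmono [] k x) (xmono v g)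
      = (\<lambda>c. xmono (p @ v) g c - xmono (q @ v) g c - (\<tau> * alpha n l z k g * xact k v) * xmono v (gmul k g) c)"
    unfolding S.mul_diff_left[OF S.alg_diff[OF m(1,2)] S.alg_scale[OF m(3)] m(4)]
      S.mul_diff_left[OF m(1,2,4)] S.mul_scale_left[OF m(3,4)]
    by (simp add: S_mul_basis alpha_one xact_one gmul_one mult.assoc)
  show ?thesis
    unfolding inner S.mul_diff_right[OF S.alg_diff[OF m(6,7)] S.alg_scale[OF m(8)] m(5)]
      S.mul_diff_right[OF m(6,7,5)] S.mul_scale_right[OF m(8,5)]
    by (simp add: S_mul_basis alpha_one xact_one gmul_one)
qed

lemma swap_relation:
  assumes a: "a \<in> {1..n}" and b: "b \<in> {1..n}" and ba: "b < a"
  shows "\<exists>\<tau> k. k \<in> G \<and> (\<lambda>x. xmono [a, b] gone x - xmono [b, a] gone x - \<tau> * xmono [] k x) \<in> Hid"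
proof -
  consider (adj) "a = b + 1" | (wrap) "a = n" "b = 1" | (far) "a \<noteq> b + 1" "\<not> (a = n \<and> b = 1)" by blast
  then show ?thesis
  proof cases
    case adj
    have s: "succ_idx n b = a" using adj a by (simp add: succ_idx_def)
    have "(\<lambda>x. (-1) * rel_adj b x) \<in> Hid"
      using rel_adj_in[OF b] unfolding Hideal_eq by (rule ideal_gen_scale)
    also have "(\<lambda>x. (-1) * rel_adj b x)
        = (\<lambda>x. xmono [a, b] gone x - xmono [b, a] gone x - (- t b) * xmono [] (gen n z b) x)"
      unfolding rel_adj_def s by (rule ext) (simp add: algebra_simps)
    finally show ?thesis using gen_G[OF b] by blast
  next
    case wrap
    have "succ_idx n a = b" using wrap by (simp add: succ_idx_def)
    then show ?thesis using rel_adj_in[OF a] gen_G[OF a] unfolding rel_adj_def by auto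
  next
    case far
    have "idx_dist a b \<notin> {1, n - 1}" using far ba a b by (auto simp: idx_dist_def)
    then have "(\<lambda>x. xmono [a, b] gone x - xmono [b, a] gone x - 0 * xmono [] gone x) \<in> Hid"
      using rel_far_in[OF a b] unfolding rel_far_def by simp
    then show ?thesis using gone_G by blast
  qed
qed

lemma swap_step:
  assumes w: "set (u @ [a, b] @ v) \<subseteq> {1..n}" and g: "g \<in> G" and ba: "b < a"
  shows "\<exists>\<kappa> g2. g2 \<in> G \<and>
    (\<lambda>x. xmono (u @ [a, b] @ v) g x - xmono (u @ [b, a] @ v) g x - \<kappa> * xmono (u @ v) g2 x) \<in> Hid"
proof -
  have ab: "a \<in> {1..n}" "b \<in> {1..n}" and uv: "set u \<subseteq> {1..n}" "set v \<subseteq> {1..n}" using w by auto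
  obtain \<tau> k where k: "k \<in> G"
    and R: "(\<lambda>x. xmono [a, b] gone x - xmono [b, a] gone x - \<tau> * xmono [] k x) \<in> Hid"
    using swap_relation[OF ab ba] by blast
  have "S.mul (xmono u gone) (S.mul (\<lambda>x. xmono [a, b] gone x - xmono [b, a] gone x - \<tau> * xmono [] k x) (xmono v g)) \<in> Hid"
    using R unfolding Hideal_eq by (intro ideal_gen_mult_left ideal_gen_mult_right xmono_alg uv g gone_G)
  then have "(\<lambda>x. xmono (u @ [a, b] @ v) g x - xmono (u @ [b, a] @ v) g x
                - (\<tau> * alpha n l z k g * xact k v) * xmono (u @ v) (gmul k g) x) \<in> Hid"
    using relation_sandwich[OF uv(1) _ _ uv(2) g k, of "[a, b]" "[b, a]" \<tau>] ab by simp
  then show ?thesis using gmul_G[OF k g] by blast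
qed

text \<open>Induction on the length of the word, and for fixed length on the inversion weight.\<close>
lemma reducible_xmono:
  "set w \<subseteq> {1..n} \<Longrightarrow> g \<in> G \<Longrightarrow> reducible (xmono w g)"
proof (induction "length w" arbitrary: w g rule: less_induct)
  case less
  note shorter = less.hyps
  have "length w' = length w \<Longrightarrow> set w' \<subseteq> {1..n} \<Longrightarrow> reducible (xmono w' g)" for w'
  proof (induction "inversion_weight w'" arbitrary: w' rule: less_induct)
    case less
    show ?case
    proof (cases "sorted w'")
      case True then show ?thesis using reducible_sorted less.prems \<open>g \<in> G\<close> by blast
    next
      case False
      then obtain u a b v where wd: "w' = u @ [a, b] @ v" and ba: "b < a" using unsorted_inversion by blast
      obtain \<kappa> g2 where g2: "g2 \<in> G" and D: "(\<lambda>x. xmono (u @ [a, b] @ v) g x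
          - xmono (u @ [b, a] @ v) g x - \<kappa> * xmono (u @ v) g2 x) \<in> Hid"
        using swap_step[OF _ \<open>g \<in> G\<close> ba] less.prems(2) wd by blast
      have D': "(\<lambda>x. xmono w' g x - (1 * xmono (u @ [b, a] @ v) g x + \<kappa> * xmono (u @ v) g2 x)) \<in> Hid"
        using D unfolding wd by (simp add: algebra_simps)
      have "reducible (xmono (u @ [b, a] @ v) g)"
        using less.hyps[of "u @ [b, a] @ v"] inversion_weight_swap[OF ba] less.prems wd by auto
      moreover have "reducible (xmono (u @ v) g2)"
        using shorter[of "u @ v"] less.prems g2 wd by auto
      ultimately show ?thesis using reducible_mod[OF D' reducible_lin] by blast
    qed
  qed
  then show ?case using less.prems by blast
qed

lemma reducible_all: "a \<in> S.alg \<Longrightarrow> reducible a"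
proof -
  have "finite A \<Longrightarrow> a \<in> S.alg \<Longrightarrow> supp a \<subseteq> A \<Longrightarrow> reducible a" for A a
  proof (induction A arbitrary: a rule: finite_induct)
    case empty
    then have "a = (\<lambda>_. 0)" by (auto simp: supp_def)
    then show ?case using reducible_zero by simp
  next
    case (insert b A)
    let ?a' = "a(b := 0)"
    have a': "?a' \<in> S.alg" "supp ?a' \<subseteq> A"
      using insert.prems by (auto simp: S.alg_iff supp_def intro: finite_subset)
    show ?case
    proof (cases "a b = 0")
      case True
      then have "?a' = a" by auto
      then show ?thesis using insert.IH a' by simp
    next
      case False
      then obtain w g where b: "b = (w, g)" "set w \<subseteq> {1..n}" "g \<in> G"
        using insert.prems by (cases b) (auto simp: S.alg_iff supp_def Sbasis_iff)
      have "a = (\<lambda>x. 1 * ?a' x + a b * xmono w g x)" by (auto simp: b basis_el_def)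
      then show ?thesis using reducible_lin[OF insert.IH[OF a'] reducible_xmono[OF b(2,3)]] by metis
    qed
  qed
  then show "a \<in> S.alg \<Longrightarrow> reducible a" by (auto simp: S.alg_iff)
qed

end

subsection \<open>Injectivity of Theta on the quotient\<close>

context theta_setting
begin

text \<open>For s supported on sorted words, the coefficient of Theta(s) at y^(word_exp w0) \<otimes> g0,
  where (w0, g0) has a word of maximal length in the support of s, is s(w0, g0): the other
  basis elements contribute only in lower degree or at different leading monomials.\<close>
lemma Theta_sorted_leading:
  assumes s: "s \<in> Sorted" and b0: "s (w0, g0) \<noteq> 0"
    and maxl: "\<And>w g. s (w, g) \<noteq> 0 \<Longrightarrow> length w \<le> length w0"
  shows "Theta s (word_exp w0, g0) = s (w0, g0)"
proof -
  have fs: "finite (supp s)" and sb: "supp s \<subseteq> Sbasis n l" and sorted: "\<And>w g. s (w, g) \<noteq> 0 \<Longrightarrow> sorted w"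
    using s by (auto simp: Sorted_def S.alg_iff)
  have w0: "(w0, g0) \<in> Sbasis n l" using sb b0 by (auto simp: supp_def)
  have dM: "deg (word_exp w0) = int (length w0)" using deg_word_exp w0 by (simp add: Sbasis_iff)
  have summand: "s b * theta_basis b (word_exp w0, g0) = (if b = (w0, g0) then s (w0, g0) else 0)"
    if b: "b \<in> supp s" for b
  proof -
    obtain w g where bw: "b = (w, g)" by fastforce
    have bS: "(w, g) \<in> Sbasis n l" and nz: "s (w, g) \<noteq> 0" using sb b bw by (auto simp: supp_def)
    show ?thesis
    proof (cases "length w = length w0")
      case False
      then have "length w < length w0" using maxl[OF nz] by simp
      then have "theta_basis (w, g) (word_exp w0, g0) = 0"
        using theta_basis_degree[OF bS, of "word_exp w0" g0] dM by fastforce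
      then show ?thesis using False bw by auto
    next
      case True
      then have "theta_basis b (word_exp w0, g0) = (if word_exp w0 = word_exp w \<and> g0 = g then 1 else 0)"
        using theta_basis_top[OF bS, of "word_exp w0" g0] dM bw by simp
      moreover have "word_exp w0 = word_exp w \<and> g0 = g \<longleftrightarrow> b = (w0, g0)"
        using word_exp_inj[OF sorted[OF b0] sorted[OF nz]] bw by auto
      ultimately show ?thesis by auto
    qed
  qed
  have "Theta s (word_exp w0, g0) = (\<Sum>b\<in>supp s. s b * theta_basis b (word_exp w0, g0))"
    by (simp add: Theta_def lin_ext_def)
  also have "\<dots> = (\<Sum>b\<in>supp s. if b = (w0, g0) then s (w0, g0) else 0)"
    by (rule sum.cong[OF refl]) (rule summand)
  also have "\<dots> = s (w0, g0)"
    using fs b0 by (simp add: supp_def)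
  finally show ?thesis .
qed

text \<open>Hence Theta is injective on elements supported on sorted words: evaluate at the
  leading monomial of a longest word in the support.\<close>
lemma Theta_sorted_injective:
  assumes s: "s \<in> Sorted" and th: "Theta s = (\<lambda>_. 0)" shows "s = (\<lambda>_. 0)"
proof (rule ccontr)
  assume "s \<noteq> (\<lambda>_. 0)"
  then have ne: "supp s \<noteq> {}" by (auto simp: supp_def)
  have fs: "finite (supp s)" using s by (auto simp: Sorted_def S.alg_iff)
  have "Max ((\<lambda>b. length (fst b)) ` supp s) \<in> (\<lambda>b. length (fst b)) ` supp s"
    using fs ne by (intro Max_in) auto
  then obtain b0 where b0: "b0 \<in> supp s" "length (fst b0) = Max ((\<lambda>b. length (fst b)) ` supp s)"
    by auto
  obtain w0 g0 where b0': "b0 = (w0, g0)" by fastforce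
  have "length w \<le> length w0" if "s (w, g) \<noteq> 0" for w g
  proof -
    have "length (fst (w, g)) \<in> (\<lambda>b. length (fst b)) ` supp s"
      by (rule imageI) (simp add: supp_def that)
    then have "length w \<le> Max ((\<lambda>b. length (fst b)) ` supp s)"
      using Max_ge[OF finite_imageI[OF fs]] by simp
    then show ?thesis using b0(2) b0' by simp
  qed
  then have "Theta s (word_exp w0, g0) = s (w0, g0)"
    using Theta_sorted_leading[OF s] b0 b0' by (simp add: supp_def)
  then show False using th b0 b0' by (simp add: supp_def)
qed

text \<open>Conversely, the kernel of Theta lies in the ideal: reduce modulo the ideal to sorted
  words, where Theta is injective.\<close>
lemma Theta_kernel: assumes a: "a \<in> S.alg" and th: "Theta a = (\<lambda>_. 0)" shows "a \<in> Hid"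
proof -
  obtain s where s: "s \<in> Sorted" "(\<lambda>x. a x - s x) \<in> Hid"
    using reducible_all[OF a] unfolding reducible_def by blast
  have sA: "s \<in> S.alg" using s by (simp add: Sorted_def)
  have "(\<lambda>y. Theta a y - Theta s y) = (\<lambda>_. 0)"
    using Hideal_kernel[OF s(2)] Theta_diff[OF a sA] by simp
  then have "Theta s = (\<lambda>_. 0)" using th by (simp add: fun_eq_iff)
  then have "s = (\<lambda>_. 0)" using Theta_sorted_injective[OF s(1)] by blast
  then show ?thesis using s(2) by simp
qed

lemma Theta_sx: "i \<in> {1..n} \<Longrightarrow> Theta (sx i) = theta_x i"
  by (simp add: sx_def Theta_xmono theta_basis_def tg_def flip: tone_def)
    (simp add: T_mul_one_right theta_x_alg)

lemma theta_x_explicit: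
  "theta_x j = fdiff (ty j) (\<lambda>y. kappa j * T.mul (tyinv (succ_idx n j)) (tg (gen n z j)) y)"
proof -
  have "T.mul (tyinv s) (tg g) = ymono (evec s (-1)) g" for s g
    by (simp add: tyinv_def ymon_def evec_def tg_eq T_mul_basis alpha_one yact_one gmul_one)
  moreover have "ty j = ymono (evec j 1) gone" by (simp add: ty_def ymon_def evec_def)
  ultimately show ?thesis by (simp add: theta_x_def fdiff_def ypart_def gpart_def)
qed

end

theorem proposition1p1:
  fixes n l :: nat and \<zeta> :: complex and t :: "nat \<Rightarrow> complex"
  assumes "n \<ge> 3" and "l \<ge> 2"
    and "\<zeta> ^ l = 1" and "\<forall>k. 0 < k \<and> k < l \<longrightarrow> \<zeta> ^ k \<noteq> 1"
  shows "\<exists>\<Theta>. (\<forall>a\<in>Salg n l. \<Theta> a \<in> Talg n l)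
    \<and> (\<forall>a\<in>Salg n l. \<forall>b\<in>Salg n l. \<Theta> (\<lambda>x. a x + b x) = (\<lambda>y. \<Theta> a y + \<Theta> b y))
    \<and> (\<forall>c. \<forall>a\<in>Salg n l. \<Theta> (\<lambda>x. c * a x) = (\<lambda>y. c * \<Theta> a y))
    \<and> (\<forall>a\<in>Salg n l. \<forall>b\<in>Salg n l. \<Theta> (smul n l \<zeta> a b) = tmul n l \<zeta> (\<Theta> a) (\<Theta> b))
    \<and> \<Theta> sone = tone
    \<and> (\<forall>a\<in>Salg n l. \<Theta> a = (\<lambda>_. 0) \<longleftrightarrow> a \<in> Hideal n l \<zeta> t)
    \<and> (\<forall>i\<in>{1..n}.
         \<Theta> (sx i) = fdiff (ty i)
                      (\<lambda>y. (\<zeta> * t i / (\<zeta> - 1)) * tmul n l \<zeta> (tyinv (succ_idx n i)) (tg (gen n \<zeta> i)) y)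
       \<and> \<Theta> (sg (gen n \<zeta> i)) = tg (gen n \<zeta> i))"
proof -
  interpret theta_setting l \<zeta> n t
    by unfold_locales (use assms in auto)
  have alg: "Salg n l = S.alg" "Talg n l = T.alg" by (simp_all add: Salg_def Talg_def)
  have unit: "Theta sone = tone"
    using Theta_group[OF gone_G] by (simp add: sone_def tg_def tone_def)
  have gens: "Theta (sx i) = fdiff (ty i)
        (\<lambda>y. (\<zeta> * t i / (\<zeta> - 1)) * T.mul (tyinv (succ_idx n i)) (tg (gen n \<zeta> i)) y)"
    "Theta (sg (gen n \<zeta> i)) = tg (gen n \<zeta> i)" if "i \<in> {1..n}" for i
    using Theta_sx[OF that] theta_x_explicit[of i] Theta_group[OF gen_G[OF that]]
    by (simp_all add: sg_def kappa_def)
  show ?thesis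
    unfolding alg smul_eq tmul_eq
  proof (intro exI[of _ Theta] conjI ballI allI)
    fix a b assume "a \<in> S.alg" "b \<in> S.alg"
    then show "Theta (\<lambda>x. a x + b x) = (\<lambda>y. Theta a y + Theta b y)"
      using Theta_lin[of a b 1 1] by simp
  next
    fix a assume "a \<in> S.alg"
    then show "(Theta a = (\<lambda>_. 0)) = (a \<in> Hideal n l \<zeta> t)"
      using Hideal_kernel Theta_kernel by blast
  qed (simp_all add: Theta_alg Theta_scale Theta_mul unit gens)
qed

end
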